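(* Let $I$ be a nonempty set and let $\mathcal{M}_I$ be the Banach algebra whose underlying Banach space is $\ell^1(I\times I)$ with product $(ab)(i,j)=\sum_{k\in I}a(i,k)b(k,j)$. Regard $\ell^1(I)$ as a Banach $\mathcal{M}_I$-bimodule via $(a\cdot b)(i)=\sum_{k\in I}a(i,k)b(k)$ and $(b\cdot a)(i)=\sum_{k\in I}b(k)a(k,i)$ for $a\in\mathcal{M}_I$, $b\in\ell^1(I)$, $i\in I$. Then: (i) $\ell^1(I)$ is a two sided $\mathcal{M}_I$-induced module; (ii) $\mathcal{M}_I$ is a self-induced Banach algebra.
   Context: $\hat{\otimes}$ denotes the completed projective tensor product. For a Banach algebra $A$, a right Banach $A$-module $E$ and a left Banach $A$-module $F$, $E\hat{\otimes}_A F$ is the quotient of $E\hat{\otimes}F$ by the closed linear span of $\{x\cdot a\otimes y-x\otimes a\cdot y\}$. A left Banach $A$-module $E$ is called $A$-induced if the map $\mu_E:A\hat{\otimes}_A E\to E$, $a\otimes x\mapsto a\cdot x$, is an isomorphism (of Banach modules); right induced modules are defined analogously via $E\hat{\otimes}_A A\to E$, and a bimodule is two sided induced if it is both left and right induced. A Banach algebra $A$ is self-induced if the multiplication map $A\hat{\otimes}_A A\to A$, $a\otimes b\mapsto ab$, is an isomorphism of $A$-bimodules. *)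

theory Defs
  imports "HOL-Analysis.Analysis"
begin

definition l1 :: "('i \<Rightarrow> complex) set" where
  "l1 = {f. (\<lambda>i. norm (f i)) summable_on UNIV}"

definition l1norm :: "('i \<Rightarrow> complex) \<Rightarrow> real" where
  "l1norm f = (\<Sum>\<^sub>\<infinity>i. norm (f i))"

definition M_mult :: "('i \<times> 'i \<Rightarrow> complex) \<Rightarrow> ('i \<times> 'i \<Rightarrow> complex) \<Rightarrow> ('i \<times> 'i \<Rightarrow> complex)" where
  "M_mult a b = (\<lambda>(i, j). \<Sum>\<^sub>\<infinity>k. a (i, k) * b (k, j))"

definition M_lact :: "('i \<times> 'i \<Rightarrow> complex) \<Rightarrow> ('i \<Rightarrow> complex) \<Rightarrow> ('i \<Rightarrow> complex)" where
  "M_lact a b = (\<lambda>i. \<Sum>\<^sub>\<infinity>k. a (i, k) * b k)"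

definition M_ract :: "('i \<Rightarrow> complex) \<Rightarrow> ('i \<times> 'i \<Rightarrow> complex) \<Rightarrow> ('i \<Rightarrow> complex)" where
  "M_ract b a = (\<lambda>i. \<Sum>\<^sub>\<infinity>k. b k * a (k, i))"

text \<open>The algebraic tensor product is realised as the free complex vector space on
  X x Y (finitely supported functions) modulo the bilinearity relations; the balanced
  relations x.a (x) y - x (x) a.y are added to the relation space.  The projective
  (quotient) seminorm is the infimum of sum |c_i| |x_i| |y_i| over representatives, and
  the completion is realised by Cauchy sequences for this seminorm.\<close>

definition fsupp :: "('p \<Rightarrow> complex) \<Rightarrow> 'p set" where
  "fsupp u = {p. u p \<noteq> 0}"

definition free_tensor :: "'x set \<Rightarrow> 'y set \<Rightarrow> ('x \<times> 'y \<Rightarrow> complex) set" where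
  "free_tensor X Y = {u. finite (fsupp u) \<and> fsupp u \<subseteq> X \<times> Y}"

definition delta :: "'p \<Rightarrow> 'p \<Rightarrow> complex" where
  "delta p = (\<lambda>q. if q = p then 1 else 0)"

definition lin_span :: "('p \<Rightarrow> complex) set \<Rightarrow> ('p \<Rightarrow> complex) set" where
  "lin_span S = {u. \<exists>G c. finite G \<and> G \<subseteq> S \<and> u = (\<lambda>q. \<Sum>g\<in>G. c g * g q)}"

definition tensor_relations ::
  "('x \<Rightarrow> complex) set \<Rightarrow> ('y \<Rightarrow> complex) set \<Rightarrow> 'b set
   \<Rightarrow> (('x \<Rightarrow> complex) \<Rightarrow> 'b \<Rightarrow> ('x \<Rightarrow> complex))
   \<Rightarrow> ('b \<Rightarrow> ('y \<Rightarrow> complex) \<Rightarrow> ('y \<Rightarrow> complex))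
   \<Rightarrow> (('x \<Rightarrow> complex) \<times> ('y \<Rightarrow> complex) \<Rightarrow> complex) set" where
  "tensor_relations X Y Alg rX lY =
     {(\<lambda>q. delta (\<lambda>t. a t + a' t, y) q - delta (a, y) q - delta (a', y) q) | a a' y.
         a \<in> X \<and> a' \<in> X \<and> y \<in> Y}
   \<union> {(\<lambda>q. delta (a, \<lambda>t. y t + y' t) q - delta (a, y) q - delta (a, y') q) | a y y'.
         a \<in> X \<and> y \<in> Y \<and> y' \<in> Y}
   \<union> {(\<lambda>q. delta (\<lambda>t. c * a t, y) q - c * delta (a, y) q) | c a y. a \<in> X \<and> y \<in> Y}
   \<union> {(\<lambda>q. delta (a, \<lambda>t. c * y t) q - c * delta (a, y) q) | c a y. a \<in> X \<and> y \<in> Y}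
   \<union> {(\<lambda>q. delta (rX a b, y) q - delta (a, lY b y) q) | a b y.
         a \<in> X \<and> b \<in> Alg \<and> y \<in> Y}"

definition bal_seminorm ::
  "('x \<Rightarrow> complex) set \<Rightarrow> (('x \<Rightarrow> complex) \<Rightarrow> real)
   \<Rightarrow> ('y \<Rightarrow> complex) set \<Rightarrow> (('y \<Rightarrow> complex) \<Rightarrow> real) \<Rightarrow> 'b set
   \<Rightarrow> (('x \<Rightarrow> complex) \<Rightarrow> 'b \<Rightarrow> ('x \<Rightarrow> complex))
   \<Rightarrow> ('b \<Rightarrow> ('y \<Rightarrow> complex) \<Rightarrow> ('y \<Rightarrow> complex))
   \<Rightarrow> (('x \<Rightarrow> complex) \<times> ('y \<Rightarrow> complex) \<Rightarrow> complex) \<Rightarrow> real" where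
  "bal_seminorm X nX Y nY Alg rX lY u =
     Inf {(\<Sum>p\<in>fsupp v. norm (v p) * nX (fst p) * nY (snd p)) | v.
            v \<in> free_tensor X Y \<and> (\<lambda>q. u q - v q) \<in> lin_span (tensor_relations X Y Alg rX lY)}"

definition tmap ::
  "(('x \<Rightarrow> complex) \<Rightarrow> ('y \<Rightarrow> complex) \<Rightarrow> ('z \<Rightarrow> complex))
   \<Rightarrow> (('x \<Rightarrow> complex) \<times> ('y \<Rightarrow> complex) \<Rightarrow> complex) \<Rightarrow> ('z \<Rightarrow> complex)" where
  "tmap m u = (\<lambda>t. \<Sum>p\<in>fsupp u. u p * m (fst p) (snd p) t)"

text \<open>The canonical map mu : X (x)^_A Y \<rightarrow> Z induced by m is an isomorphism of Banach
  spaces: it is (well defined and) bounded, and its extension to the completion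
  (Cauchy sequences modulo null sequences) is bijective onto Z with bounded inverse.\<close>
definition induced_iso ::
  "('x \<Rightarrow> complex) set \<Rightarrow> (('x \<Rightarrow> complex) \<Rightarrow> real)
   \<Rightarrow> ('y \<Rightarrow> complex) set \<Rightarrow> (('y \<Rightarrow> complex) \<Rightarrow> real) \<Rightarrow> 'b set
   \<Rightarrow> (('x \<Rightarrow> complex) \<Rightarrow> 'b \<Rightarrow> ('x \<Rightarrow> complex))
   \<Rightarrow> ('b \<Rightarrow> ('y \<Rightarrow> complex) \<Rightarrow> ('y \<Rightarrow> complex))
   \<Rightarrow> (('x \<Rightarrow> complex) \<Rightarrow> ('y \<Rightarrow> complex) \<Rightarrow> ('z \<Rightarrow> complex))
   \<Rightarrow> ('z \<Rightarrow> complex) set \<Rightarrow> (('z \<Rightarrow> complex) \<Rightarrow> real) \<Rightarrow> bool" where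
  "induced_iso X nX Y nY Alg rX lY m Z nZ \<longleftrightarrow>
     (let q = bal_seminorm X nX Y nY Alg rX lY;
          cauchy = (\<lambda>s. (\<forall>n. s n \<in> free_tensor X Y) \<and>
                         (\<forall>e>0. \<exists>N. \<forall>k\<ge>N. \<forall>n\<ge>N. q (\<lambda>p. s k p - s n p) < e));
          conv = (\<lambda>s z. (\<lambda>n. nZ (\<lambda>t. tmap m (s n) t - z t)) \<longlonglongrightarrow> 0)
      in (\<forall>u\<in>free_tensor X Y. tmap m u \<in> Z)
       \<and> (\<exists>C. \<forall>u\<in>free_tensor X Y. nZ (tmap m u) \<le> C * q u)
       \<and> (\<forall>z\<in>Z. \<exists>s. cauchy s \<and> conv s z)
       \<and> (\<forall>s s' z. cauchy s \<and> cauchy s' \<and> z \<in> Z \<and> conv s z \<and> conv s' z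
              \<longrightarrow> (\<lambda>n. q (\<lambda>p. s n p - s' n p)) \<longlonglongrightarrow> 0)
       \<and> (\<exists>C. \<forall>s z. cauchy s \<and> z \<in> Z \<and> conv s z \<longrightarrow> lim (\<lambda>n. q (s n)) \<le> C * nZ z))"

definition l1_left_induced :: "'i itself \<Rightarrow> bool" where
  "l1_left_induced (_::'i itself) \<longleftrightarrow>
     induced_iso (l1 :: ('i \<times> 'i \<Rightarrow> complex) set) l1norm (l1 :: ('i \<Rightarrow> complex) set) l1norm
       (l1 :: ('i \<times> 'i \<Rightarrow> complex) set) M_mult M_lact M_lact (l1 :: ('i \<Rightarrow> complex) set) l1norm"

definition l1_right_induced :: "'i itself \<Rightarrow> bool" where
  "l1_right_induced (_::'i itself) \<longleftrightarrow>
     induced_iso (l1 :: ('i \<Rightarrow> complex) set) l1norm (l1 :: ('i \<times> 'i \<Rightarrow> complex) set) l1norm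
       (l1 :: ('i \<times> 'i \<Rightarrow> complex) set) M_ract M_mult M_ract (l1 :: ('i \<Rightarrow> complex) set) l1norm"

definition M_self_induced :: "'i itself \<Rightarrow> bool" where
  "M_self_induced (_::'i itself) \<longleftrightarrow>
     induced_iso (l1 :: ('i \<times> 'i \<Rightarrow> complex) set) l1norm (l1 :: ('i \<times> 'i \<Rightarrow> complex) set) l1norm
       (l1 :: ('i \<times> 'i \<Rightarrow> complex) set) M_mult M_mult M_mult (l1 :: ('i \<times> 'i \<Rightarrow> complex) set) l1norm"

end

theory Submission
  imports Defs
begin

text \<open>The map \<open>\<mu>\<close> induced by a contractive balanced bilinear map kills the balancing relations
  and is bounded by the projective seminorm; it is an isomorphism onto the target \<open>\<ell>\<^sup>1\<close>-space as
  soon as its range is dense and every tensor \<open>u\<close> has representatives of projective cost at most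
  \<open>\<parallel>\<mu> u\<parallel> + \<epsilon>\<close>. Fix an index \<open>i\<^sub>0\<close>. For \<open>\<ell>\<^sup>1(I)\<close> as a left module, balancing moves everything
  into the left factor: \<open>a \<otimes> x \<equiv> a c\<^sub>x \<otimes> \<delta>\<^sub>i\<^sub>0 = c\<^sub>a\<^sub>x \<otimes> \<delta>\<^sub>i\<^sub>0\<close>, where \<open>c\<^sub>x\<close> has column \<open>i\<^sub>0\<close>
  equal to \<open>x\<close>; so \<open>u \<equiv> c\<^sub>\<mu>\<^sub>u \<otimes> \<delta>\<^sub>i\<^sub>0\<close>, of cost exactly \<open>\<parallel>\<mu> u\<parallel>\<close>, and symmetrically on the right. For
  \<open>\<M>\<^sub>I\<close> there is no such exact representative: one keeps finitely many rows \<open>i \<in> K\<close> of the left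
  factors, writes row \<open>i\<close> as \<open>E\<^sub>i\<^sub>i\<^sub>0\<close> times that row moved to row \<open>i\<^sub>0\<close>, and balances \<open>E\<^sub>i\<^sub>i\<^sub>0\<close> across;
  the resulting terms recombine into the rows of \<open>\<mu> u\<close>, while the discarded rows have small mass.\<close>

lemma l1_summable: "f \<in> l1 \<Longrightarrow> f summable_on UNIV"
  by (simp add: l1_def summable_on_iff_abs_summable_on_complex)

lemma l1norm_nonneg: "l1norm f \<ge> 0"
  unfolding l1norm_def by (rule infsum_nonneg) simp

lemma l1_dominated:
  assumes "g summable_on UNIV" "\<And>i. norm (f i) \<le> g i"
  shows "f \<in> l1" "l1norm f \<le> infsum g UNIV"
proof -
  have "(\<lambda>i. norm (f i)) summable_on UNIV"
    by (rule summable_on_comparison_test[OF assms(1)]) (use assms(2) in auto)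
  then show "f \<in> l1" by (simp add: l1_def)
  then show "l1norm f \<le> infsum g UNIV" unfolding l1norm_def
    by (intro infsum_mono) (use assms in \<open>auto simp: l1_def\<close>)
qed

lemma l1_comparison:
  assumes "g \<in> l1" "\<And>i. norm (f i) \<le> C * norm (g i)"
  shows "f \<in> l1" "l1norm f \<le> C * l1norm g"
proof -
  have s: "(\<lambda>i. C * norm (g i)) summable_on UNIV"
    using assms(1) by (intro summable_on_cmult_right) (simp add: l1_def)
  show "f \<in> l1" by (rule l1_dominated(1)[OF s assms(2)])
  show "l1norm f \<le> C * l1norm g"
    using l1_dominated(2)[OF s assms(2)] by (simp add: l1norm_def infsum_cmult_right')
qed

lemma l1_add: "f \<in> l1 \<Longrightarrow> g \<in> l1 \<Longrightarrow> (\<lambda>t. f t + g t) \<in> l1"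
  and l1norm_add: "f \<in> l1 \<Longrightarrow> g \<in> l1 \<Longrightarrow> l1norm (\<lambda>t. f t + g t) \<le> l1norm f + l1norm g"
proof -
  assume "f \<in> l1" "g \<in> l1"
  then have s: "(\<lambda>i. norm (f i) + norm (g i)) summable_on UNIV"
    by (intro summable_on_add) (auto simp: l1_def)
  have b: "norm (f i + g i) \<le> norm (f i) + norm (g i)" for i
    by (rule norm_triangle_ineq)
  show "(\<lambda>t. f t + g t) \<in> l1" by (rule l1_dominated(1)[OF s b])
  have "infsum (\<lambda>i. norm (f i) + norm (g i)) UNIV = l1norm f + l1norm g"
    unfolding l1norm_def by (rule infsum_add) (use \<open>f \<in> l1\<close> \<open>g \<in> l1\<close> in \<open>auto simp: l1_def\<close>)
  then show "l1norm (\<lambda>t. f t + g t) \<le> l1norm f + l1norm g"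
    using l1_dominated(2)[OF s b] by simp
qed

lemma l1norm_zero [simp]: "l1norm (\<lambda>t. 0) = 0"
  by (simp add: l1norm_def)

lemma l1_scale: "f \<in> l1 \<Longrightarrow> (\<lambda>t. c * f t) \<in> l1"
  using l1_comparison(1)[of f "\<lambda>t. c * f t" "norm c"] by (simp add: norm_mult)

lemma l1norm_scale: "l1norm (\<lambda>t. c * f t) = norm c * l1norm f"
  unfolding l1norm_def by (simp add: norm_mult infsum_cmult_right')

lemma l1_diff: "f \<in> l1 \<Longrightarrow> g \<in> l1 \<Longrightarrow> (\<lambda>t. f t - g t) \<in> l1"
  using l1_add[of f "\<lambda>t. (-1) * g t"] l1_scale[of g "-1"] by simp

lemma l1norm_diff_commute: "l1norm (\<lambda>t. f t - g t) = l1norm (\<lambda>t. g t - f t)"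
  unfolding l1norm_def by (simp add: norm_minus_commute)

lemma l1norm_diff_triangle:
  assumes "f \<in> l1" "g \<in> l1" "h \<in> l1"
  shows "l1norm (\<lambda>t. f t - h t) \<le> l1norm (\<lambda>t. f t - g t) + l1norm (\<lambda>t. g t - h t)"
  using l1norm_add[OF l1_diff[OF assms(1,2)] l1_diff[OF assms(2,3)]] by simp

lemma l1norm_diff_reverse_triangle:
  assumes "f \<in> l1" "g \<in> l1"
  shows "\<bar>l1norm f - l1norm g\<bar> \<le> l1norm (\<lambda>t. f t - g t)"
  using l1norm_add[OF l1_diff[OF assms] assms(2)] l1norm_add[OF l1_diff[OF assms(2,1)] assms(1)]
    l1norm_diff_commute[of f g] by simp

lemma l1_sum: "finite F \<Longrightarrow> (\<And>p. p \<in> F \<Longrightarrow> f p \<in> l1) \<Longrightarrow> (\<lambda>t. \<Sum>p\<in>F. f p t) \<in> l1"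
proof (induction F rule: finite_induct)
  case empty
  show ?case by (simp add: l1_def)
qed (simp add: l1_add)

lemma l1norm_sum: "finite F \<Longrightarrow> (\<And>p. p \<in> F \<Longrightarrow> f p \<in> l1) \<Longrightarrow>
    l1norm (\<lambda>t. \<Sum>p\<in>F. f p t) \<le> (\<Sum>p\<in>F. l1norm (f p))"
proof (induction F rule: finite_induct)
  case (insert x F)
  have "l1norm (\<lambda>t. f x t + (\<Sum>p\<in>F. f p t)) \<le> l1norm (f x) + l1norm (\<lambda>t. \<Sum>p\<in>F. f p t)"
    by (rule l1norm_add) (use insert in \<open>auto intro: l1_sum\<close>)
  then show ?case using insert by simp
qed (simp add: l1norm_def)

lemma l1_le_l1norm: "f \<in> l1 \<Longrightarrow> norm (f k) \<le> l1norm f"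
  unfolding l1norm_def
  using infsum_mono_neutral[where f="\<lambda>i. norm (f i)" and A="{k}" and B=UNIV] by (simp add: l1_def)

lemma norm_infsum_le_l1norm: "f \<in> l1 \<Longrightarrow> norm (infsum f UNIV) \<le> l1norm f"
  unfolding l1norm_def l1_def by (intro norm_infsum_bound) simp

lemma infsum_single_point:
  fixes f :: "'a \<Rightarrow> 'b::{comm_monoid_add,t2_space}"
  assumes "\<And>x. x \<noteq> a \<Longrightarrow> f x = 0"
  shows "infsum f UNIV = f a"
  using infsum_cong_neutral[where S="{a}" and T=UNIV and f=f and g=f] assms by simp

lemma l1_delta: "delta p \<in> l1" "l1norm (delta p) = 1"
proof -
  have "(\<lambda>i. norm (delta p i)) summable_on UNIV"
    using summable_on_cong_neutral[where S="{p}" and T=UNIV and f="\<lambda>i. norm (delta p i)"] by (auto simp: delta_def)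
  then show "delta p \<in> l1" by (simp add: l1_def)
  show "l1norm (delta p) = 1"
    unfolding l1norm_def by (subst infsum_single_point[where a=p]) (auto simp: delta_def)
qed

lemma l1_reindex:
  assumes "inj h" "\<And>q. q \<notin> range h \<Longrightarrow> g q = 0"
  shows "g \<in> l1 \<longleftrightarrow> (g \<circ> h) \<in> l1" "l1norm g = l1norm (g \<circ> h)"
proof -
  have "(\<lambda>q. norm (g q)) summable_on UNIV \<longleftrightarrow> (\<lambda>q. norm (g q)) summable_on range h"
    by (rule summable_on_cong_neutral) (use assms in auto)
  then show "g \<in> l1 \<longleftrightarrow> (g \<circ> h) \<in> l1"
    unfolding l1_def using summable_on_reindex[OF assms(1), of "\<lambda>q. norm (g q)"]
    by (simp add: o_def)
  have "infsum (\<lambda>q. norm (g q)) UNIV = infsum (\<lambda>q. norm (g q)) (range h)"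
    by (rule infsum_cong_neutral) (use assms in auto)
  then show "l1norm g = l1norm (g \<circ> h)"
    unfolding l1norm_def using infsum_reindex[OF assms(1), of "\<lambda>q. norm (g q)"]
    by (simp add: o_def)
qed

lemma l1_uniform_tail:
  assumes "finite F" "\<And>p. p \<in> F \<Longrightarrow> g p \<in> l1" "d > 0"
  obtains S where "finite S" "\<And>p. p \<in> F \<Longrightarrow> infsum (\<lambda>q. norm (g p q)) (UNIV - S) < d"
proof -
  let ?close = "\<lambda>S. \<forall>p\<in>F. dist (sum (\<lambda>q. norm (g p q)) S) (infsum (\<lambda>q. norm (g p q)) UNIV) < d"
  have "\<forall>p\<in>F. eventually (\<lambda>S. dist (sum (\<lambda>q. norm (g p q)) S) (infsum (\<lambda>q. norm (g p q)) UNIV) < d)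
      (finite_subsets_at_top UNIV)"
  proof
    fix p assume "p \<in> F"
    then have "(\<lambda>q. norm (g p q)) summable_on UNIV" using assms(2) by (simp add: l1_def)
    from infsum_tendsto[OF this]
    show "eventually (\<lambda>S. dist (sum (\<lambda>q. norm (g p q)) S) (infsum (\<lambda>q. norm (g p q)) UNIV) < d)
        (finite_subsets_at_top UNIV)"
      using assms(3) tendstoD by blast
  qed
  then have "eventually ?close (finite_subsets_at_top UNIV)"
    by (rule eventually_ball_finite[OF assms(1)])
  then have "\<exists>X. finite X \<and> X \<subseteq> UNIV \<and> (\<forall>Y. finite Y \<and> X \<subseteq> Y \<and> Y \<subseteq> UNIV \<longrightarrow> ?close Y)"
    by (simp only: eventually_finite_subsets_at_top)
  then obtain S where "finite S" "\<forall>Y. finite Y \<and> S \<subseteq> Y \<and> Y \<subseteq> UNIV \<longrightarrow> ?close Y"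
    by blast
  then have S: "finite S" "?close S" by auto
  have "infsum (\<lambda>q. norm (g p q)) (UNIV - S) < d" if "p \<in> F" for p
  proof -
    have s: "(\<lambda>q. norm (g p q)) summable_on UNIV" using assms(2) that by (simp add: l1_def)
    have "infsum (\<lambda>q. norm (g p q)) (UNIV - S) = infsum (\<lambda>q. norm (g p q)) UNIV - sum (\<lambda>q. norm (g p q)) S"
      using infsum_Diff[OF s summable_on_finite[OF S(1)]] S(1) by simp
    then show ?thesis using S(2) that by (auto simp: dist_real_def)
  qed
  with S(1) show thesis by (rule that)
qed

lemma l1_rows: "a \<in> l1 \<Longrightarrow> (\<lambda>k. a (i, k)) \<in> l1"
proof -
  assume "a \<in> l1"
  then have "(\<lambda>q. norm (a q)) summable_on range (Pair i)"
    unfolding l1_def by (auto intro: summable_on_subset_banach)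
  then have "((\<lambda>q. norm (a q)) \<circ> Pair i) summable_on UNIV"
    by (subst summable_on_reindex[symmetric]) (auto simp: inj_on_def)
  then show ?thesis by (simp add: l1_def o_def)
qed

lemma l1_swap: "a \<in> l1 \<longleftrightarrow> (\<lambda>(k, j). a (j, k)) \<in> l1" "l1norm a = l1norm (\<lambda>(k, j). a (j, k))"
proof -
  have *: "(\<lambda>(k, j). a (j, k)) = a \<circ> prod.swap" by auto
  show "a \<in> l1 \<longleftrightarrow> (\<lambda>(k, j). a (j, k)) \<in> l1" "l1norm a = l1norm (\<lambda>(k, j). a (j, k))"
    unfolding * by (rule l1_reindex; auto simp: inj_on_def)+
qed

lemma l1_cols: "a \<in> l1 \<Longrightarrow> (\<lambda>k. a (k, j)) \<in> l1"
  using l1_rows[of "\<lambda>(k, j). a (j, k)" j] l1_swap(1)[of a] by simp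

lemma l1_rows_sum:
  assumes "a \<in> l1"
  shows "(\<lambda>i. l1norm (\<lambda>k. a (i, k))) summable_on UNIV" "l1norm a = infsum (\<lambda>i. l1norm (\<lambda>k. a (i, k))) UNIV"
proof -
  have s: "(\<lambda>q. norm (a q)) summable_on Sigma UNIV (\<lambda>_. UNIV)" using assms by (simp add: l1_def)
  from Infinite_Sum.abs_summable_on_Sigma_iff[THEN iffD1, OF s]
  show "(\<lambda>i. l1norm (\<lambda>k. a (i, k))) summable_on UNIV"
    by (simp add: l1norm_def infsum_nonneg)
  show "l1norm a = infsum (\<lambda>i. l1norm (\<lambda>k. a (i, k))) UNIV"
    using infsum_Sigma_banach[of "\<lambda>q. norm (a q)" UNIV "\<lambda>_. UNIV"] s by (simp add: l1norm_def)
qed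

lemma l1_cols_sum:
  assumes "a \<in> l1"
  shows "(\<lambda>j. l1norm (\<lambda>k. a (k, j))) summable_on UNIV" "l1norm a = infsum (\<lambda>j. l1norm (\<lambda>k. a (k, j))) UNIV"
proof -
  have s: "(\<lambda>(k, j). a (j, k)) \<in> l1" using l1_swap(1)[of a] assms by blast
  show "(\<lambda>j. l1norm (\<lambda>k. a (k, j))) summable_on UNIV" using l1_rows_sum(1)[OF s] by simp
  show "l1norm a = infsum (\<lambda>j. l1norm (\<lambda>k. a (k, j))) UNIV"
    using l1_rows_sum(2)[OF s] l1_swap(2)[of a] by simp
qed

lemma l1_of_rows:
  assumes "\<And>i. (\<lambda>k. a (i, k)) \<in> l1" "(\<lambda>i. l1norm (\<lambda>k. a (i, k))) summable_on UNIV"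
  shows "a \<in> l1"
proof -
  have "(\<lambda>q. norm (a q)) summable_on Sigma UNIV (\<lambda>_. UNIV)"
    by (rule Infinite_Sum.abs_summable_on_Sigma_iff[THEN iffD2])
       (use assms in \<open>auto simp: l1_def l1norm_def infsum_nonneg\<close>)
  then show "a \<in> l1" by (simp add: l1_def)
qed

lemma sum_l1norm_rows_le:
  assumes "a \<in> l1" "finite K"
  shows "(\<Sum>i\<in>K. l1norm (\<lambda>j. a (i, j))) \<le> l1norm a"
  using infsum_mono_neutral[where f="\<lambda>i. l1norm (\<lambda>j. a (i, j))" and A=K and B=UNIV]
    l1_rows_sum[OF assms(1)] assms(2)
  by (simp add: l1norm_nonneg)

lemma l1_mult_bounded:
  assumes "u \<in> l1" "\<And>k. norm (v k) \<le> C"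
  shows "(\<lambda>k. u k * v k) \<in> l1" "l1norm (\<lambda>k. u k * v k) \<le> C * l1norm u"
proof -
  have "norm (u k * v k) \<le> C * norm (u k)" for k
    using assms(2)[of k] unfolding norm_mult by (metis mult.commute mult_right_mono norm_ge_zero)
  then show "(\<lambda>k. u k * v k) \<in> l1" "l1norm (\<lambda>k. u k * v k) \<le> C * l1norm u"
    using l1_comparison[OF assms(1), of "\<lambda>k. u k * v k" C] by auto
qed

lemma summable_on_mult_l1: "u \<in> l1 \<Longrightarrow> v \<in> l1 \<Longrightarrow> (\<lambda>k. u k * v k) summable_on UNIV"
  by (rule l1_summable[OF l1_mult_bounded(1)[OF _ l1_le_l1norm]])

lemma norm_infsum_mult_l1_le:
  "u \<in> l1 \<Longrightarrow> v \<in> l1 \<Longrightarrow> norm (infsum (\<lambda>k. u k * v k) UNIV) \<le> l1norm u * l1norm v"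
proof -
  assume "u \<in> l1" "v \<in> l1"
  then have "(\<lambda>k. u k * v k) \<in> l1" "l1norm (\<lambda>k. u k * v k) \<le> l1norm v * l1norm u"
    using l1_mult_bounded[of u v "l1norm v"] l1_le_l1norm[of v] by auto
  then show ?thesis
    using norm_infsum_le_l1norm[of "\<lambda>k. u k * v k"] by (simp add: mult.commute)
qed

lemma infsum_mult_add_left:
  "u \<in> l1 \<Longrightarrow> u' \<in> l1 \<Longrightarrow> v \<in> l1 \<Longrightarrow>
    infsum (\<lambda>k. (u k + u' k) * v k) UNIV = infsum (\<lambda>k. u k * v k) UNIV + infsum (\<lambda>k. u' k * v k) UNIV"
  unfolding distrib_right by (rule infsum_add) (simp_all add: summable_on_mult_l1)

lemma infsum_mult_add_right:
  "u \<in> l1 \<Longrightarrow> v \<in> l1 \<Longrightarrow> v' \<in> l1 \<Longrightarrow>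
    infsum (\<lambda>k. u k * (v k + v' k)) UNIV = infsum (\<lambda>k. u k * v k) UNIV + infsum (\<lambda>k. u k * v' k) UNIV"
  unfolding distrib_left by (rule infsum_add) (simp_all add: summable_on_mult_l1)

text \<open>Fubini for the absolutely summable family \<open>f l * g (l, k) * h k\<close>.\<close>

lemma infsum_mult_assoc:
  fixes f :: "'l \<Rightarrow> complex" and g :: "'l \<times> 'k \<Rightarrow> complex" and h :: "'k \<Rightarrow> complex"
  assumes f: "\<And>l. norm (f l) \<le> Cf" and g: "g \<in> l1" and h: "\<And>k. norm (h k) \<le> Ch"
  shows "infsum (\<lambda>k. infsum (\<lambda>l. f l * g (l, k)) UNIV * h k) UNIV
       = infsum (\<lambda>l. f l * infsum (\<lambda>k. g (l, k) * h k) UNIV) UNIV"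
proof -
  have Cf: "Cf \<ge> 0" using f[of undefined] norm_ge_zero order_trans by blast
  have "norm (f l * g (l, k) * h k) \<le> (Cf * Ch) * norm (g (l, k))" for l k
  proof -
    have "norm (f l * g (l, k) * h k) = norm (f l) * norm (h k) * norm (g (l, k))"
      by (simp add: norm_mult)
    also have "\<dots> \<le> (Cf * Ch) * norm (g (l, k))"
      by (intro mult_right_mono mult_mono f h) (use Cf in auto)
    finally show ?thesis .
  qed
  then have "(\<lambda>(l, k). f l * g (l, k) * h k) \<in> l1"
    using l1_comparison(1)[OF g, of "\<lambda>(l, k). f l * g (l, k) * h k" "Cf * Ch"] by auto
  then have "infsum (\<lambda>l. infsum (\<lambda>k. f l * g (l, k) * h k) UNIV) UNIV
      = infsum (\<lambda>k. infsum (\<lambda>l. f l * g (l, k) * h k) UNIV) UNIV"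
    by (intro infsum_swap_banach) (auto dest: l1_summable)
  moreover have "infsum (\<lambda>l. f l * g (l, k) * h k) UNIV = infsum (\<lambda>l. f l * g (l, k)) UNIV * h k" for k
    by (rule infsum_cmult_left')
  moreover have "infsum (\<lambda>k. f l * g (l, k) * h k) UNIV = f l * infsum (\<lambda>k. g (l, k) * h k) UNIV" for l
    by (simp add: mult.assoc infsum_cmult_right')
  ultimately show ?thesis by simp
qed

section \<open>The matrix algebra and its actions\<close>

lemma M_mult_apply: "M_mult a b (i, j) = infsum (\<lambda>k. a (i, k) * b (k, j)) UNIV"
  by (simp add: M_mult_def)

lemma M_lact_l1:
  assumes a: "a \<in> l1" and y: "y \<in> l1"
  shows "M_lact a y \<in> l1" "l1norm (M_lact a y) \<le> l1norm a * l1norm y"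
proof -
  have b: "norm (M_lact a y i) \<le> l1norm (\<lambda>k. a (i, k)) * l1norm y" for i
    unfolding M_lact_def by (rule norm_infsum_mult_l1_le[OF l1_rows[OF a] y])
  have s: "(\<lambda>i. l1norm (\<lambda>k. a (i, k)) * l1norm y) summable_on UNIV"
    by (rule summable_on_cmult_left[OF l1_rows_sum(1)[OF a]])
  have "infsum (\<lambda>i. l1norm (\<lambda>k. a (i, k)) * l1norm y) UNIV = l1norm a * l1norm y"
    using l1_rows_sum(2)[OF a] by (simp add: infsum_cmult_left')
  then show "M_lact a y \<in> l1" "l1norm (M_lact a y) \<le> l1norm a * l1norm y"
    using l1_dominated[OF s b] by auto
qed

lemma M_ract_l1:
  assumes x: "x \<in> l1" and a: "a \<in> l1"
  shows "M_ract x a \<in> l1" "l1norm (M_ract x a) \<le> l1norm x * l1norm a"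
proof -
  have b: "norm (M_ract x a j) \<le> l1norm x * l1norm (\<lambda>k. a (k, j))" for j
    unfolding M_ract_def by (rule norm_infsum_mult_l1_le[OF x l1_cols[OF a]])
  have s: "(\<lambda>j. l1norm x * l1norm (\<lambda>k. a (k, j))) summable_on UNIV"
    by (rule summable_on_cmult_right[OF l1_cols_sum(1)[OF a]])
  have "infsum (\<lambda>j. l1norm x * l1norm (\<lambda>k. a (k, j))) UNIV = l1norm x * l1norm a"
    using l1_cols_sum(2)[OF a] by (simp add: infsum_cmult_right')
  then show "M_ract x a \<in> l1" "l1norm (M_ract x a) \<le> l1norm x * l1norm a"
    using l1_dominated[OF s b] by auto
qed

lemma M_mult_row: "(\<lambda>j. M_mult a b (i, j)) = M_ract (\<lambda>k. a (i, k)) b"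
  by (simp add: M_mult_def M_ract_def)

lemma M_mult_l1:
  assumes a: "a \<in> l1" and b: "b \<in> l1"
  shows "M_mult a b \<in> l1" "l1norm (M_mult a b) \<le> l1norm a * l1norm b"
proof -
  have row: "(\<lambda>j. M_mult a b (i, j)) \<in> l1"
    and row_bound: "l1norm (\<lambda>j. M_mult a b (i, j)) \<le> l1norm (\<lambda>k. a (i, k)) * l1norm b" for i
    unfolding M_mult_row by (rule M_ract_l1[OF l1_rows[OF a] b])+
  have s: "(\<lambda>i. l1norm (\<lambda>k. a (i, k)) * l1norm b) summable_on UNIV"
    by (rule summable_on_cmult_left[OF l1_rows_sum(1)[OF a]])
  have s_rows: "(\<lambda>i. l1norm (\<lambda>j. M_mult a b (i, j))) summable_on UNIV"
    by (rule summable_on_comparison_test[OF s]) (use row_bound in \<open>auto simp: l1norm_nonneg\<close>)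
  show ab: "M_mult a b \<in> l1" by (rule l1_of_rows[OF row s_rows])
  have "l1norm (M_mult a b) = infsum (\<lambda>i. l1norm (\<lambda>j. M_mult a b (i, j))) UNIV"
    by (rule l1_rows_sum(2)[OF ab])
  also have "\<dots> \<le> infsum (\<lambda>i. l1norm (\<lambda>k. a (i, k)) * l1norm b) UNIV"
    by (rule infsum_mono[OF s_rows s row_bound])
  also have "\<dots> = l1norm a * l1norm b"
    using l1_rows_sum(2)[OF a] by (simp add: infsum_cmult_left')
  finally show "l1norm (M_mult a b) \<le> l1norm a * l1norm b" .
qed

lemma M_lact_add_left:
  assumes "a \<in> l1" "a' \<in> l1" "y \<in> l1"
  shows "M_lact (\<lambda>t. a t + a' t) y = (\<lambda>t. M_lact a y t + M_lact a' y t)"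
  unfolding M_lact_def by (rule ext, rule infsum_mult_add_left) (use assms l1_rows in auto)

lemma M_lact_add_right:
  assumes "a \<in> l1" "y \<in> l1" "y' \<in> l1"
  shows "M_lact a (\<lambda>t. y t + y' t) = (\<lambda>t. M_lact a y t + M_lact a y' t)"
  unfolding M_lact_def by (rule ext, rule infsum_mult_add_right) (use assms l1_rows in auto)

lemma M_lact_scale_left: "M_lact (\<lambda>t. c * a t) y = (\<lambda>t. c * M_lact a y t)"
  by (simp add: M_lact_def mult.assoc infsum_cmult_right')

lemma M_lact_scale_right: "M_lact a (\<lambda>t. c * y t) = (\<lambda>t. c * M_lact a y t)"
  by (simp add: M_lact_def mult.left_commute infsum_cmult_right')

lemma M_ract_add_left:
  assumes "x \<in> l1" "x' \<in> l1" "a \<in> l1"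
  shows "M_ract (\<lambda>t. x t + x' t) a = (\<lambda>t. M_ract x a t + M_ract x' a t)"
  unfolding M_ract_def by (rule ext, rule infsum_mult_add_left) (use assms l1_cols in auto)

lemma M_ract_add_right:
  assumes "x \<in> l1" "a \<in> l1" "a' \<in> l1"
  shows "M_ract x (\<lambda>t. a t + a' t) = (\<lambda>t. M_ract x a t + M_ract x a' t)"
  unfolding M_ract_def by (rule ext, rule infsum_mult_add_right) (use assms l1_cols in auto)

lemma M_ract_scale_left: "M_ract (\<lambda>t. c * x t) a = (\<lambda>t. c * M_ract x a t)"
  by (simp add: M_ract_def mult.assoc infsum_cmult_right')

lemma M_ract_scale_right: "M_ract x (\<lambda>t. c * a t) = (\<lambda>t. c * M_ract x a t)"
  by (simp add: M_ract_def mult.left_commute infsum_cmult_right')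

lemma M_mult_add_left:
  assumes "a \<in> l1" "a' \<in> l1" "b \<in> l1"
  shows "M_mult (\<lambda>t. a t + a' t) b = (\<lambda>t. M_mult a b t + M_mult a' b t)"
proof
  fix t :: "'a \<times> 'a"
  obtain i j where t: "t = (i, j)" by fastforce
  show "M_mult (\<lambda>t. a t + a' t) b t = M_mult a b t + M_mult a' b t"
    unfolding t M_mult_apply
    by (rule infsum_mult_add_left) (simp_all add: assms l1_rows l1_cols)
qed

lemma M_mult_add_right:
  assumes "a \<in> l1" "b \<in> l1" "b' \<in> l1"
  shows "M_mult a (\<lambda>t. b t + b' t) = (\<lambda>t. M_mult a b t + M_mult a b' t)"
proof
  fix t :: "'a \<times> 'a"
  obtain i j where t: "t = (i, j)" by fastforce
  show "M_mult a (\<lambda>t. b t + b' t) t = M_mult a b t + M_mult a b' t"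
    unfolding t M_mult_apply
    by (rule infsum_mult_add_right) (simp_all add: assms l1_rows l1_cols)
qed

lemma M_mult_scale_left: "M_mult (\<lambda>t. c * a t) b = (\<lambda>t. c * M_mult a b t)"
  by (auto simp: M_mult_def mult.assoc infsum_cmult_right')

lemma M_mult_scale_right: "M_mult a (\<lambda>t. c * b t) = (\<lambda>t. c * M_mult a b t)"
  by (auto simp: M_mult_def mult.left_commute infsum_cmult_right')

lemma M_lact_assoc:
  assumes "a \<in> l1" "b \<in> l1" "y \<in> l1"
  shows "M_lact (M_mult a b) y = M_lact a (M_lact b y)"
proof
  fix i
  show "M_lact (M_mult a b) y i = M_lact a (M_lact b y) i"
    unfolding M_lact_def M_mult_apply
    by (rule infsum_mult_assoc[OF l1_le_l1norm[OF l1_rows[OF assms(1)]] assms(2) l1_le_l1norm[OF assms(3)]])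
qed

lemma M_ract_assoc:
  assumes "x \<in> l1" "a \<in> l1" "b \<in> l1"
  shows "M_ract (M_ract x a) b = M_ract x (M_mult a b)"
proof
  fix j
  show "M_ract (M_ract x a) b j = M_ract x (M_mult a b) j"
    unfolding M_ract_def M_mult_apply
    by (rule infsum_mult_assoc[OF l1_le_l1norm[OF assms(1)] assms(2) l1_le_l1norm[OF l1_cols[OF assms(3)]]])
qed

lemma M_mult_assoc:
  assumes "a \<in> l1" "b \<in> l1" "c \<in> l1"
  shows "M_mult (M_mult a b) c = M_mult a (M_mult b c)"
proof
  fix t :: "'a \<times> 'a"
  obtain i j where t: "t = (i, j)" by fastforce
  show "M_mult (M_mult a b) c t = M_mult a (M_mult b c) t"
    unfolding t M_mult_apply
    by (rule infsum_mult_assoc[OF l1_le_l1norm[OF l1_rows[OF assms(1)]] assms(2) l1_le_l1norm[OF l1_cols[OF assms(3)]]])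
qed

lemma fsupp_add: "fsupp (\<lambda>q. u q + v q) \<subseteq> fsupp u \<union> fsupp v"
  by (auto simp: fsupp_def)

lemma fsupp_diff: "fsupp (\<lambda>q. u q - v q) \<subseteq> fsupp u \<union> fsupp v"
  by (auto simp: fsupp_def)

lemma fsupp_scale: "fsupp (\<lambda>q. c * u q) \<subseteq> fsupp u"
  by (auto simp: fsupp_def)

lemma fsupp_delta: "fsupp (delta p) = {p}"
  by (auto simp: fsupp_def delta_def)

lemma finite_fsupp_delta: "finite (fsupp (delta p))"
  by (simp add: fsupp_delta)

lemma finite_fsupp_diff: "finite (fsupp u) \<Longrightarrow> finite (fsupp v) \<Longrightarrow> finite (fsupp (\<lambda>q. u q - v q))"
  by (rule finite_subset[OF fsupp_diff]) simp

lemma finite_fsupp_scale: "finite (fsupp u) \<Longrightarrow> finite (fsupp (\<lambda>q. c * u q))"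
  by (rule finite_subset[OF fsupp_scale])

lemma fsupp_sum: "fsupp (\<lambda>q. \<Sum>g\<in>G. F g q) \<subseteq> (\<Union>g\<in>G. fsupp (F g))"
proof
  fix q assume "q \<in> fsupp (\<lambda>q. \<Sum>g\<in>G. F g q)"
  then have "(\<Sum>g\<in>G. F g q) \<noteq> 0" by (simp add: fsupp_def)
  then obtain g where "g \<in> G" "F g q \<noteq> 0" by (meson sum.neutral)
  then show "q \<in> (\<Union>g\<in>G. fsupp (F g))" by (auto simp: fsupp_def)
qed

lemma finite_fsupp_sum: "finite G \<Longrightarrow> (\<And>g. g \<in> G \<Longrightarrow> finite (fsupp (F g))) \<Longrightarrow> finite (fsupp (\<lambda>q. \<Sum>g\<in>G. F g q))"
  by (rule finite_subset[OF fsupp_sum]) auto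

lemma free_tensor_fsupp_subset:
  assumes "u \<in> free_tensor X Y" "v \<in> free_tensor X Y" "fsupp w \<subseteq> fsupp u \<union> fsupp v"
  shows "w \<in> free_tensor X Y"
proof -
  have "finite (fsupp u \<union> fsupp v)" "fsupp u \<union> fsupp v \<subseteq> X \<times> Y"
    using assms(1,2) by (auto simp: free_tensor_def)
  with assms(3) show ?thesis unfolding free_tensor_def by (auto dest: finite_subset)
qed

lemma free_tensor_add: "u \<in> free_tensor X Y \<Longrightarrow> v \<in> free_tensor X Y \<Longrightarrow> (\<lambda>q. u q + v q) \<in> free_tensor X Y"
  by (rule free_tensor_fsupp_subset[OF _ _ fsupp_add])

lemma free_tensor_diff: "u \<in> free_tensor X Y \<Longrightarrow> v \<in> free_tensor X Y \<Longrightarrow> (\<lambda>q. u q - v q) \<in> free_tensor X Y"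
  by (rule free_tensor_fsupp_subset[OF _ _ fsupp_diff])

lemma free_tensor_scale: "u \<in> free_tensor X Y \<Longrightarrow> (\<lambda>q. c * u q) \<in> free_tensor X Y"
  using free_tensor_fsupp_subset[of u X Y u "\<lambda>q. c * u q"] fsupp_scale[of c u] by blast

lemma free_tensor_delta: "x \<in> X \<Longrightarrow> y \<in> Y \<Longrightarrow> delta (x, y) \<in> free_tensor X Y"
  unfolding free_tensor_def by (simp add: fsupp_delta)

lemma free_tensor_zero: "(\<lambda>q. 0) \<in> free_tensor X Y"
  unfolding free_tensor_def by (simp add: fsupp_def)

lemma free_tensor_sum: "finite G \<Longrightarrow> (\<And>g. g \<in> G \<Longrightarrow> F g \<in> free_tensor X Y) \<Longrightarrow> (\<lambda>q. \<Sum>g\<in>G. F g q) \<in> free_tensor X Y"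
proof (induction G rule: finite_induct)
  case empty then show ?case using free_tensor_zero by simp
next
  case (insert x G)
  have "(\<lambda>q. F x q + (\<Sum>g\<in>G. F g q)) \<in> free_tensor X Y"
    by (rule free_tensor_add) (use insert in auto)
  then show ?case using insert(1,2) by simp
qed

lemma fsupp_expansion:
  assumes "finite (fsupp u)"
  shows "u = (\<lambda>q. \<Sum>p\<in>fsupp u. u p * delta p q)"
proof
  fix q
  have "(\<Sum>p\<in>fsupp u. u p * delta p q) = (\<Sum>p\<in>fsupp u. if p = q then u q else 0)"
    by (rule sum.cong) (auto simp: delta_def)
  also have "\<dots> = (if q \<in> fsupp u then u q else 0)" using assms by simp
  also have "\<dots> = u q" by (auto simp: fsupp_def)
  finally show "u q = (\<Sum>p\<in>fsupp u. u p * delta p q)" by simp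
qed

lemma tmap_superset:
  assumes "finite S" "fsupp u \<subseteq> S"
  shows "tmap m u = (\<lambda>t. \<Sum>p\<in>S. u p * m (fst p) (snd p) t)"
  unfolding tmap_def
proof
  fix t show "(\<Sum>p\<in>fsupp u. u p * m (fst p) (snd p) t) = (\<Sum>p\<in>S. u p * m (fst p) (snd p) t)"
    by (rule sum.mono_neutral_left) (use assms in \<open>auto simp: fsupp_def\<close>)
qed

lemma tmap_add:
  assumes "finite (fsupp u)" "finite (fsupp v)"
  shows "tmap m (\<lambda>q. u q + v q) = (\<lambda>t. tmap m u t + tmap m v t)"
proof -
  let ?S = "fsupp u \<union> fsupp v"
  have "tmap m (\<lambda>q. u q + v q) = (\<lambda>t. \<Sum>p\<in>?S. (u p + v p) * m (fst p) (snd p) t)"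
    by (rule tmap_superset) (use assms fsupp_add[of u v] in auto)
  moreover have "tmap m u = (\<lambda>t. \<Sum>p\<in>?S. u p * m (fst p) (snd p) t)"
    by (rule tmap_superset) (use assms in auto)
  moreover have "tmap m v = (\<lambda>t. \<Sum>p\<in>?S. v p * m (fst p) (snd p) t)"
    by (rule tmap_superset) (use assms in auto)
  ultimately show ?thesis by (simp add: distrib_right sum.distrib)
qed

lemma tmap_scale:
  assumes "finite (fsupp u)"
  shows "tmap m (\<lambda>q. c * u q) = (\<lambda>t. c * tmap m u t)"
proof -
  have "tmap m (\<lambda>q. c * u q) = (\<lambda>t. \<Sum>p\<in>fsupp u. (c * u p) * m (fst p) (snd p) t)"
    by (rule tmap_superset) (use assms fsupp_scale[of c u] in auto)
  then show ?thesis by (simp add: tmap_def sum_distrib_left mult.assoc)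
qed

lemma tmap_diff:
  assumes "finite (fsupp u)" "finite (fsupp v)"
  shows "tmap m (\<lambda>q. u q - v q) = (\<lambda>t. tmap m u t - tmap m v t)"
proof -
  have f: "finite (fsupp (\<lambda>q. (-1) * v q))" using assms(2) fsupp_scale by (rule finite_subset[rotated])
  have "tmap m (\<lambda>q. u q - v q) = tmap m (\<lambda>q. u q + (-1) * v q)" by simp
  also have "\<dots> = (\<lambda>t. tmap m u t + tmap m (\<lambda>q. (-1) * v q) t)"
    by (rule tmap_add[OF assms(1) f])
  also have "\<dots> = (\<lambda>t. tmap m u t - tmap m v t)"
    using tmap_scale[OF assms(2), where c="-1" and m=m] by simp
  finally show ?thesis .
qed

lemma tmap_delta: "tmap m (delta p) = m (fst p) (snd p)"
  unfolding tmap_def fsupp_delta by (simp add: delta_def)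

lemma tmap_zero: "tmap m (\<lambda>q. 0) = (\<lambda>t. 0)"
  by (simp add: tmap_def fsupp_def)

lemma tmap_sum:
  assumes "finite G" "\<And>g. g \<in> G \<Longrightarrow> finite (fsupp (F g))"
  shows "tmap m (\<lambda>q. \<Sum>g\<in>G. F g q) = (\<lambda>t. \<Sum>g\<in>G. tmap m (F g) t)"
  using assms
proof (induction G rule: finite_induct)
  case empty then show ?case by (simp add: tmap_zero)
next
  case (insert x G)
  have "tmap m (\<lambda>q. \<Sum>g\<in>insert x G. F g q) = tmap m (\<lambda>q. F x q + (\<Sum>g\<in>G. F g q))"
    using insert by simp
  also have "\<dots> = (\<lambda>t. tmap m (F x) t + tmap m (\<lambda>q. \<Sum>g\<in>G. F g q) t)"
    by (rule tmap_add) (use insert in \<open>auto intro: finite_fsupp_sum\<close>)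
  finally show ?case using insert by simp
qed

definition proj_cost :: "(('x \<Rightarrow> complex) \<times> ('y \<Rightarrow> complex) \<Rightarrow> complex) \<Rightarrow> real" where
  "proj_cost v = (\<Sum>p\<in>fsupp v. norm (v p) * l1norm (fst p) * l1norm (snd p))"

lemma proj_cost_superset:
  assumes "finite S" "fsupp u \<subseteq> S"
  shows "proj_cost u = (\<Sum>p\<in>S. norm (u p) * l1norm (fst p) * l1norm (snd p))"
  unfolding proj_cost_def
  by (rule sum.mono_neutral_left) (use assms in \<open>auto simp: fsupp_def\<close>)

lemma proj_cost_nonneg: "proj_cost u \<ge> 0"
  unfolding proj_cost_def by (intro sum_nonneg mult_nonneg_nonneg l1norm_nonneg norm_ge_zero)

lemma proj_cost_add:
  assumes "finite (fsupp u)" "finite (fsupp v)"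
  shows "proj_cost (\<lambda>q. u q + v q) \<le> proj_cost u + proj_cost v"
proof -
  let ?S = "fsupp u \<union> fsupp v"
  have "proj_cost (\<lambda>q. u q + v q) = (\<Sum>p\<in>?S. norm (u p + v p) * l1norm (fst p) * l1norm (snd p))"
    by (rule proj_cost_superset) (use assms fsupp_add[of u v] in auto)
  also have "\<dots> \<le> (\<Sum>p\<in>?S. norm (u p) * l1norm (fst p) * l1norm (snd p) + norm (v p) * l1norm (fst p) * l1norm (snd p))"
    by (rule sum_mono) (metis distrib_right mult_right_mono norm_triangle_ineq l1norm_nonneg)
  also have "\<dots> = proj_cost u + proj_cost v"
    by (simp add: sum.distrib proj_cost_superset[of ?S u] proj_cost_superset[of ?S v] assms)
  finally show ?thesis .
qed

lemma proj_cost_scale: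
  assumes "finite (fsupp u)"
  shows "proj_cost (\<lambda>q. c * u q) = norm c * proj_cost u"
proof -
  have "proj_cost (\<lambda>q. c * u q) = (\<Sum>p\<in>fsupp u. norm (c * u p) * l1norm (fst p) * l1norm (snd p))"
    by (rule proj_cost_superset) (use assms fsupp_scale[of c u] in auto)
  then show ?thesis by (simp add: proj_cost_def sum_distrib_left norm_mult mult.assoc)
qed

lemma proj_cost_delta: "proj_cost (delta p) = l1norm (fst p) * l1norm (snd p)"
  unfolding proj_cost_def fsupp_delta by (simp add: delta_def)

lemma proj_cost_zero: "proj_cost (\<lambda>q. 0) = 0"
  by (simp add: proj_cost_def fsupp_def)

lemma proj_cost_sum:
  assumes "finite G" "\<And>g. g \<in> G \<Longrightarrow> finite (fsupp (F g))"
  shows "proj_cost (\<lambda>q. \<Sum>g\<in>G. F g q) \<le> (\<Sum>g\<in>G. proj_cost (F g))"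
  using assms
proof (induction G rule: finite_induct)
  case empty then show ?case by (simp add: proj_cost_zero)
next
  case (insert x G)
  have "proj_cost (\<lambda>q. \<Sum>g\<in>insert x G. F g q) = proj_cost (\<lambda>q. F x q + (\<Sum>g\<in>G. F g q))"
    using insert by simp
  also have "\<dots> \<le> proj_cost (F x) + proj_cost (\<lambda>q. \<Sum>g\<in>G. F g q)"
    by (rule proj_cost_add) (use insert in \<open>auto intro: finite_fsupp_sum\<close>)
  finally show ?case using insert by simp
qed

lemma lin_span_zero: "(\<lambda>q. 0) \<in> lin_span S"
  unfolding lin_span_def by (intro CollectI exI[of _ "{}"] exI[of _ "\<lambda>_. 0"]) simp

lemma lin_span_base: "g \<in> S \<Longrightarrow> g \<in> lin_span S"
  unfolding lin_span_def by (intro CollectI exI[of _ "{g}"] exI[of _ "\<lambda>_. 1"]) simp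

lemma lin_span_add:
  assumes "u \<in> lin_span S" "v \<in> lin_span S"
  shows "(\<lambda>q. u q + v q) \<in> lin_span S"
proof -
  obtain G c where G: "finite G" "G \<subseteq> S" "u = (\<lambda>q. \<Sum>g\<in>G. c g * g q)"
    using assms(1) unfolding lin_span_def by blast
  obtain H d where H: "finite H" "H \<subseteq> S" "v = (\<lambda>q. \<Sum>g\<in>H. d g * g q)"
    using assms(2) unfolding lin_span_def by blast
  let ?e = "\<lambda>g. (if g \<in> G then c g else 0) + (if g \<in> H then d g else 0)"
  have "(\<lambda>q. u q + v q) = (\<lambda>q. \<Sum>g\<in>G \<union> H. ?e g * g q)"
  proof
    fix q
    have "(\<Sum>g\<in>G \<union> H. ?e g * g q) = (\<Sum>g\<in>G \<union> H. (if g \<in> G then c g * g q else 0)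
        + (if g \<in> H then d g * g q else 0))"
      by (rule sum.cong) (auto simp: distrib_right)
    also have "\<dots> = (\<Sum>g\<in>G \<union> H. (if g \<in> G then c g * g q else 0))
        + (\<Sum>g\<in>G \<union> H. (if g \<in> H then d g * g q else 0))"
      by (rule sum.distrib)
    also have "\<dots> = (\<Sum>g\<in>(G \<union> H) \<inter> G. c g * g q) + (\<Sum>g\<in>(G \<union> H) \<inter> H. d g * g q)"
      using G H by (simp only: sum.inter_restrict finite_Un)
    also have "(G \<union> H) \<inter> G = G" by auto
    also have "(G \<union> H) \<inter> H = H" by auto
    finally have "(\<Sum>g\<in>G \<union> H. ?e g * g q) = (\<Sum>g\<in>G. c g * g q) + (\<Sum>g\<in>H. d g * g q)" .
    moreover have "u q + v q = (\<Sum>g\<in>G. c g * g q) + (\<Sum>g\<in>H. d g * g q)"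
      by (simp only: G(3) H(3))
    ultimately show "u q + v q = (\<Sum>g\<in>G \<union> H. ?e g * g q)" by simp
  qed
  moreover have "finite (G \<union> H)" "G \<union> H \<subseteq> S" using G H by auto
  ultimately show ?thesis
    unfolding lin_span_def by (intro CollectI exI[of _ "G \<union> H"] exI[of _ ?e] conjI)
qed

lemma lin_span_scale:
  assumes "u \<in> lin_span S"
  shows "(\<lambda>q. a * u q) \<in> lin_span S"
proof -
  obtain G c where G: "finite G" "G \<subseteq> S" "u = (\<lambda>q. \<Sum>g\<in>G. c g * g q)"
    using assms(1) unfolding lin_span_def by blast
  have "(\<lambda>q. a * u q) = (\<lambda>q. \<Sum>g\<in>G. (a * c g) * g q)"
    using G by (simp add: sum_distrib_left mult.assoc)
  with G(1,2) show ?thesis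
    unfolding lin_span_def by (intro CollectI exI[of _ G] exI[of _ "\<lambda>g. a * c g"] conjI)
qed

definition span_cong :: "('p \<Rightarrow> complex) set \<Rightarrow> ('p \<Rightarrow> complex) \<Rightarrow> ('p \<Rightarrow> complex) \<Rightarrow> bool" where
  "span_cong S u v \<longleftrightarrow> (\<lambda>q. u q - v q) \<in> lin_span S"

lemma span_cong_refl: "span_cong S u u"
  unfolding span_cong_def using lin_span_zero by simp

lemma span_cong_base: "(\<lambda>q. u q - v q) \<in> S \<Longrightarrow> span_cong S u v"
  unfolding span_cong_def by (rule lin_span_base)

lemma span_cong_sym: "span_cong S u v \<Longrightarrow> span_cong S v u"
proof -
  assume "span_cong S u v"
  then have "(\<lambda>q. (-1) * (u q - v q)) \<in> lin_span S" unfolding span_cong_def by (rule lin_span_scale)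
  moreover have "(\<lambda>q. (-1) * (u q - v q)) = (\<lambda>q. v q - u q)" by auto
  ultimately show ?thesis unfolding span_cong_def by simp
qed

lemma span_cong_trans [trans]: "span_cong S u v \<Longrightarrow> span_cong S v w \<Longrightarrow> span_cong S u w"
  unfolding span_cong_def using lin_span_add[of "\<lambda>q. u q - v q" S "\<lambda>q. v q - w q"] by simp

lemma span_cong_add:
  assumes "span_cong S u u'" "span_cong S v v'"
  shows "span_cong S (\<lambda>q. u q + v q) (\<lambda>q. u' q + v' q)"
proof -
  have "(\<lambda>q. (u q - u' q) + (v q - v' q)) \<in> lin_span S"
    using assms unfolding span_cong_def by (rule lin_span_add)
  moreover have "(\<lambda>q. (u q - u' q) + (v q - v' q)) = (\<lambda>q. (u q + v q) - (u' q + v' q))"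
    by (rule ext) (simp add: algebra_simps)
  ultimately show ?thesis unfolding span_cong_def by simp
qed

lemma span_cong_scale:
  assumes "span_cong S u u'"
  shows "span_cong S (\<lambda>q. c * u q) (\<lambda>q. c * u' q)"
proof -
  have "(\<lambda>q. c * (u q - u' q)) \<in> lin_span S"
    using assms unfolding span_cong_def by (rule lin_span_scale)
  moreover have "(\<lambda>q. c * (u q - u' q)) = (\<lambda>q. c * u q - c * u' q)"
    by (rule ext) (simp add: algebra_simps)
  ultimately show ?thesis unfolding span_cong_def by simp
qed

lemma span_cong_sum: "finite G \<Longrightarrow> (\<And>g. g \<in> G \<Longrightarrow> span_cong S (F g) (F' g)) \<Longrightarrow>
   span_cong S (\<lambda>q. \<Sum>g\<in>G. F g q) (\<lambda>q. \<Sum>g\<in>G. F' g q)"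
proof (induction G rule: finite_induct)
  case empty then show ?case by (simp add: span_cong_refl)
next
  case (insert x G)
  have "span_cong S (\<lambda>q. F x q + (\<Sum>g\<in>G. F g q)) (\<lambda>q. F' x q + (\<Sum>g\<in>G. F' g q))"
    by (rule span_cong_add) (use insert in auto)
  then show ?case using insert(1,2) by simp
qed

lemma span_cong_expansion:
  assumes "finite (fsupp u)" "\<And>p. p \<in> fsupp u \<Longrightarrow> span_cong S (delta p) (g p)"
  shows "span_cong S u (\<lambda>q. \<Sum>p\<in>fsupp u. u p * g p q)"
proof -
  have "span_cong S (\<lambda>q. \<Sum>p\<in>fsupp u. u p * delta p q) (\<lambda>q. \<Sum>p\<in>fsupp u. u p * g p q)"
    by (rule span_cong_sum[OF assms(1) span_cong_scale[OF assms(2)]])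
  then show ?thesis by (simp only: fsupp_expansion[OF assms(1), symmetric])
qed

section \<open>Balanced tensor products of \<open>\<ell>\<^sup>1\<close>-spaces over a contractive balanced map\<close>

locale balanced_contraction =
  fixes Alg :: "'b set"
    and rX :: "('x \<Rightarrow> complex) \<Rightarrow> 'b \<Rightarrow> ('x \<Rightarrow> complex)"
    and lY :: "'b \<Rightarrow> ('y \<Rightarrow> complex) \<Rightarrow> ('y \<Rightarrow> complex)"
    and m :: "('x \<Rightarrow> complex) \<Rightarrow> ('y \<Rightarrow> complex) \<Rightarrow> ('z \<Rightarrow> complex)"
  assumes m_l1: "x \<in> l1 \<Longrightarrow> y \<in> l1 \<Longrightarrow> m x y \<in> l1"
    and m_norm_le: "x \<in> l1 \<Longrightarrow> y \<in> l1 \<Longrightarrow> l1norm (m x y) \<le> l1norm x * l1norm y"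
    and m_add_left: "x \<in> l1 \<Longrightarrow> x' \<in> l1 \<Longrightarrow> y \<in> l1 \<Longrightarrow> m (\<lambda>t. x t + x' t) y = (\<lambda>t. m x y t + m x' y t)"
    and m_add_right: "x \<in> l1 \<Longrightarrow> y \<in> l1 \<Longrightarrow> y' \<in> l1 \<Longrightarrow> m x (\<lambda>t. y t + y' t) = (\<lambda>t. m x y t + m x y' t)"
    and m_scale_left: "x \<in> l1 \<Longrightarrow> y \<in> l1 \<Longrightarrow> m (\<lambda>t. c * x t) y = (\<lambda>t. c * m x y t)"
    and m_scale_right: "x \<in> l1 \<Longrightarrow> y \<in> l1 \<Longrightarrow> m x (\<lambda>t. c * y t) = (\<lambda>t. c * m x y t)"
    and m_balanced: "x \<in> l1 \<Longrightarrow> b \<in> Alg \<Longrightarrow> y \<in> l1 \<Longrightarrow> m (rX x b) y = m x (lY b y)"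
begin

abbreviation "R \<equiv> tensor_relations (l1::('x \<Rightarrow> complex) set) (l1::('y \<Rightarrow> complex) set) Alg rX lY"
abbreviation "FT \<equiv> free_tensor (l1::('x \<Rightarrow> complex) set) (l1::('y \<Rightarrow> complex) set)"
abbreviation "qn \<equiv> bal_seminorm (l1::('x \<Rightarrow> complex) set) l1norm (l1::('y \<Rightarrow> complex) set) l1norm Alg rX lY"
abbreviation "tcong \<equiv> span_cong R"

lemma FT_finite: "u \<in> FT \<Longrightarrow> finite (fsupp u)"
  by (simp add: free_tensor_def)

lemma FT_fsupp_l1: "u \<in> FT \<Longrightarrow> (a, b) \<in> fsupp u \<Longrightarrow> a \<in> l1 \<and> b \<in> l1"
  by (auto simp: free_tensor_def)

lemma tcong_add_left:
  "a \<in> l1 \<Longrightarrow> a' \<in> l1 \<Longrightarrow> y \<in> l1 \<Longrightarrow> tcong (delta (\<lambda>t. a t + a' t, y)) (\<lambda>q. delta (a, y) q + delta (a', y) q)"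
  by (rule span_cong_base) (auto simp: tensor_relations_def diff_diff_eq)

lemma tcong_add_right:
  "a \<in> l1 \<Longrightarrow> y \<in> l1 \<Longrightarrow> y' \<in> l1 \<Longrightarrow> tcong (delta (a, \<lambda>t. y t + y' t)) (\<lambda>q. delta (a, y) q + delta (a, y') q)"
  by (rule span_cong_base) (auto simp: tensor_relations_def diff_diff_eq)

lemma tcong_scale_left: "a \<in> l1 \<Longrightarrow> y \<in> l1 \<Longrightarrow> tcong (delta (\<lambda>t. c * a t, y)) (\<lambda>q. c * delta (a, y) q)"
  by (rule span_cong_base) (auto simp: tensor_relations_def)

lemma tcong_scale_right: "a \<in> l1 \<Longrightarrow> y \<in> l1 \<Longrightarrow> tcong (delta (a, \<lambda>t. c * y t)) (\<lambda>q. c * delta (a, y) q)"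
  by (rule span_cong_base) (auto simp: tensor_relations_def)

lemma tcong_balanced: "a \<in> l1 \<Longrightarrow> b \<in> Alg \<Longrightarrow> y \<in> l1 \<Longrightarrow> tcong (delta (rX a b, y)) (delta (a, lY b y))"
  by (rule span_cong_base) (auto simp: tensor_relations_def)

lemma tcong_sum_left:
  assumes "finite K" "\<And>k. k \<in> K \<Longrightarrow> f k \<in> l1" "y \<in> l1"
  shows "tcong (delta (\<lambda>t. \<Sum>k\<in>K. f k t, y)) (\<lambda>q. \<Sum>k\<in>K. delta (f k, y) q)"
  using assms(1,2)
proof (induction K rule: finite_induct)
  case empty
  show ?case using tcong_scale_left[of "\<lambda>t. 0" y 0] assms(3) by (simp add: l1_def)
next
  case (insert x K)
  have "tcong (delta (\<lambda>t. f x t + (\<Sum>k\<in>K. f k t), y))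
      (\<lambda>q. delta (f x, y) q + delta (\<lambda>t. \<Sum>k\<in>K. f k t, y) q)"
    by (rule tcong_add_left) (use insert assms(3) in \<open>auto intro: l1_sum\<close>)
  also have "tcong \<dots> (\<lambda>q. delta (f x, y) q + (\<Sum>k\<in>K. delta (f k, y) q))"
    by (rule span_cong_add[OF span_cong_refl]) (use insert in auto)
  finally show ?case using insert(1,2) by simp
qed

lemma tcong_sum_right:
  assumes "finite K" "\<And>k. k \<in> K \<Longrightarrow> f k \<in> l1" "a \<in> l1"
  shows "tcong (delta (a, \<lambda>t. \<Sum>k\<in>K. f k t)) (\<lambda>q. \<Sum>k\<in>K. delta (a, f k) q)"
  using assms(1,2)
proof (induction K rule: finite_induct)
  case empty
  show ?case using tcong_scale_right[of a "\<lambda>t. 0" 0] assms(3) by (simp add: l1_def)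
next
  case (insert x K)
  have "tcong (delta (a, \<lambda>t. f x t + (\<Sum>k\<in>K. f k t)))
      (\<lambda>q. delta (a, f x) q + delta (a, \<lambda>t. \<Sum>k\<in>K. f k t) q)"
    by (rule tcong_add_right) (use insert assms(3) in \<open>auto intro: l1_sum\<close>)
  also have "tcong \<dots> (\<lambda>q. delta (a, f x) q + (\<Sum>k\<in>K. delta (a, f k) q))"
    by (rule span_cong_add[OF span_cong_refl]) (use insert in auto)
  finally show ?case using insert(1,2) by simp
qed

lemma tcong_lincomb_left:
  assumes "finite K" "\<And>k. k \<in> K \<Longrightarrow> f k \<in> l1" "y \<in> l1"
  shows "tcong (\<lambda>q. \<Sum>k\<in>K. c k * delta (f k, y) q) (delta (\<lambda>t. \<Sum>k\<in>K. c k * f k t, y))"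
proof -
  have "tcong (delta (\<lambda>t. \<Sum>k\<in>K. c k * f k t, y)) (\<lambda>q. \<Sum>k\<in>K. delta (\<lambda>t. c k * f k t, y) q)"
    by (rule tcong_sum_left) (use assms in \<open>auto intro: l1_scale\<close>)
  also have "tcong \<dots> (\<lambda>q. \<Sum>k\<in>K. c k * delta (f k, y) q)"
    by (rule span_cong_sum[OF assms(1)]) (use assms in \<open>auto intro: tcong_scale_left\<close>)
  finally show ?thesis by (rule span_cong_sym)
qed

lemma tcong_lincomb_right:
  assumes "finite K" "\<And>k. k \<in> K \<Longrightarrow> f k \<in> l1" "a \<in> l1"
  shows "tcong (\<lambda>q. \<Sum>k\<in>K. c k * delta (a, f k) q) (delta (a, \<lambda>t. \<Sum>k\<in>K. c k * f k t))"
proof -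
  have "tcong (delta (a, \<lambda>t. \<Sum>k\<in>K. c k * f k t)) (\<lambda>q. \<Sum>k\<in>K. delta (a, \<lambda>t. c k * f k t) q)"
    by (rule tcong_sum_right) (use assms in \<open>auto intro: l1_scale\<close>)
  also have "tcong \<dots> (\<lambda>q. \<Sum>k\<in>K. c k * delta (a, f k) q)"
    by (rule span_cong_sum[OF assms(1)]) (use assms in \<open>auto intro: tcong_scale_right\<close>)
  finally show ?thesis by (rule span_cong_sym)
qed

lemma tcong_elementary_left:
  assumes u: "u \<in> FT" and y: "y \<in> l1"
    and f: "\<And>p. p \<in> fsupp u \<Longrightarrow> f p \<in> l1 \<and> tcong (delta p) (delta (f p, y))"
  shows "tcong u (delta (\<lambda>t. \<Sum>p\<in>fsupp u. u p * f p t, y))"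
proof -
  have "tcong u (\<lambda>q. \<Sum>p\<in>fsupp u. u p * delta (f p, y) q)"
    by (rule span_cong_expansion[OF FT_finite[OF u]]) (use f in blast)
  also have "tcong \<dots> (delta (\<lambda>t. \<Sum>p\<in>fsupp u. u p * f p t, y))"
    by (rule tcong_lincomb_left[OF FT_finite[OF u] _ y]) (use f in blast)
  finally show ?thesis .
qed

lemma tcong_elementary_right:
  assumes u: "u \<in> FT" and x: "x \<in> l1"
    and f: "\<And>p. p \<in> fsupp u \<Longrightarrow> f p \<in> l1 \<and> tcong (delta p) (delta (x, f p))"
  shows "tcong u (delta (x, \<lambda>t. \<Sum>p\<in>fsupp u. u p * f p t))"
proof -
  have "tcong u (\<lambda>q. \<Sum>p\<in>fsupp u. u p * delta (x, f p) q)"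
    by (rule span_cong_expansion[OF FT_finite[OF u]]) (use f in blast)
  also have "tcong \<dots> (delta (x, \<lambda>t. \<Sum>p\<in>fsupp u. u p * f p t))"
    by (rule tcong_lincomb_right[OF FT_finite[OF u] _ x]) (use f in blast)
  finally show ?thesis .
qed

lemma relation_finite_tmap_zero: "g \<in> R \<Longrightarrow> finite (fsupp g) \<and> tmap m g = (\<lambda>t. 0)"
  unfolding tensor_relations_def
  by (elim UnE CollectE exE conjE)
     (simp_all add: finite_fsupp_diff finite_fsupp_scale finite_fsupp_delta tmap_diff tmap_scale tmap_delta
       m_add_left m_add_right m_scale_left m_scale_right m_balanced)

lemma lin_span_finite_tmap_zero:
  assumes "g \<in> lin_span R"
  shows "finite (fsupp g) \<and> tmap m g = (\<lambda>t. 0)"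
proof -
  obtain G c where G: "finite G" "G \<subseteq> R" "g = (\<lambda>q. \<Sum>h\<in>G. c h * h q)"
    using assms unfolding lin_span_def by blast
  have fin: "finite (fsupp (\<lambda>q. c h * h q))" and zero: "tmap m (\<lambda>q. c h * h q) = (\<lambda>t. 0)" if "h \<in> G" for h
    using relation_finite_tmap_zero[of h] G(2) that by (auto intro: finite_fsupp_scale simp: tmap_scale)
  show ?thesis
    unfolding G(3) using finite_fsupp_sum[OF G(1) fin] tmap_sum[OF G(1) fin, where m=m] zero by simp
qed

lemma tmap_tcong:
  assumes "finite (fsupp u)" "tcong u v"
  shows "tmap m u = tmap m v"
proof -
  have d: "finite (fsupp (\<lambda>q. u q - v q))" "tmap m (\<lambda>q. u q - v q) = (\<lambda>t. 0)"
    using lin_span_finite_tmap_zero assms(2) unfolding span_cong_def by auto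
  have "fsupp v \<subseteq> fsupp u \<union> fsupp (\<lambda>q. u q - v q)" by (auto simp: fsupp_def)
  then have "finite (fsupp v)" using assms(1) d(1) by (rule finite_subset[OF _ finite_UnI])
  then have "(\<lambda>t. tmap m u t - tmap m v t) = (\<lambda>t. 0)" using d(2) tmap_diff[OF assms(1)] by metis
  then show ?thesis by (simp add: fun_eq_iff)
qed

lemma tmap_l1: "u \<in> FT \<Longrightarrow> tmap m u \<in> l1"
  unfolding tmap_def by (rule l1_sum) (auto simp: FT_finite intro!: l1_scale m_l1 dest: FT_fsupp_l1)

lemma tmap_norm_le_proj_cost: "u \<in> FT \<Longrightarrow> l1norm (tmap m u) \<le> proj_cost u"
proof -
  assume u: "u \<in> FT"
  have "l1norm (tmap m u) \<le> (\<Sum>p\<in>fsupp u. l1norm (\<lambda>t. u p * m (fst p) (snd p) t))"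
    unfolding tmap_def
    by (rule l1norm_sum) (auto simp: u FT_finite intro!: l1_scale m_l1 dest: FT_fsupp_l1[OF u])
  also have "\<dots> \<le> proj_cost u"
    unfolding proj_cost_def l1norm_scale
    by (rule sum_mono) (auto simp: mult.assoc intro!: mult_left_mono m_norm_le dest: FT_fsupp_l1[OF u])
  finally show ?thesis .
qed

lemma qn_eq_Inf: "qn u = Inf {proj_cost v | v. v \<in> FT \<and> tcong u v}"
  by (simp add: bal_seminorm_def proj_cost_def span_cong_def)

lemma tmap_norm_le_qn: "u \<in> FT \<Longrightarrow> l1norm (tmap m u) \<le> qn u"
  unfolding qn_eq_Inf
proof (rule cInf_greatest)
  assume u: "u \<in> FT"
  show "{proj_cost v | v. v \<in> FT \<and> tcong u v} \<noteq> {}" using u span_cong_refl by blast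
  fix x assume "x \<in> {proj_cost v | v. v \<in> FT \<and> tcong u v}"
  then obtain v where v: "x = proj_cost v" "v \<in> FT" "tcong u v" by blast
  then show "l1norm (tmap m u) \<le> x"
    using tmap_tcong[OF FT_finite[OF u] v(3)] tmap_norm_le_proj_cost[OF v(2)] by simp
qed

lemma qn_le_proj_cost: "v \<in> FT \<Longrightarrow> tcong u v \<Longrightarrow> qn u \<le> proj_cost v"
  unfolding qn_eq_Inf by (rule cInf_lower) (auto intro: proj_cost_nonneg)

lemma qn_eq_tmap_norm_if_rep:
  assumes "u \<in> FT" "v \<in> FT" "tcong u v" "proj_cost v \<le> l1norm (tmap m u)"
  shows "qn u = l1norm (tmap m u)"
  using qn_le_proj_cost[OF assms(2,3)] tmap_norm_le_qn[OF assms(1)] assms(4) by linarith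

lemma qn_eq_tmap_norm:
  assumes approx: "\<And>e. e > 0 \<Longrightarrow> \<exists>v\<in>FT. tcong u v \<and> proj_cost v \<le> l1norm (tmap m u) + e"
    and u: "u \<in> FT"
  shows "qn u = l1norm (tmap m u)"
proof (rule antisym)
  show "qn u \<le> l1norm (tmap m u)"
  proof (rule field_le_epsilon)
    fix e :: real assume "e > 0"
    then obtain v where "v \<in> FT" "tcong u v" "proj_cost v \<le> l1norm (tmap m u) + e" using approx by blast
    then show "qn u \<le> l1norm (tmap m u) + e" using qn_le_proj_cost by fastforce
  qed
  show "l1norm (tmap m u) \<le> qn u" by (rule tmap_norm_le_qn[OF u])
qed

end

lemma LIMSEQ_zero_pairwise_sum_less:
  fixes a :: "nat \<Rightarrow> real"
  assumes "a \<longlonglongrightarrow> 0" "e > 0"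
  shows "\<exists>N. \<forall>k\<ge>N. \<forall>n\<ge>N. a k + a n < e"
proof -
  obtain N where N: "\<And>n. n \<ge> N \<Longrightarrow> norm (a n - 0) < e / 2"
    using LIMSEQ_D[OF assms(1), of "e / 2"] assms(2) by auto
  have "a k + a n < e" if "k \<ge> N" "n \<ge> N" for k n
    using N[OF that(1)] N[OF that(2)] by simp
  then show ?thesis by blast
qed

context balanced_contraction
begin

lemma exists_FT_seq_tendsto:
  assumes dense: "\<And>e. e > 0 \<Longrightarrow> \<exists>u\<in>FT. l1norm (\<lambda>t. tmap m u t - z t) < e"
  shows "\<exists>s. (\<forall>n. s n \<in> FT) \<and> (\<lambda>n. l1norm (\<lambda>t. tmap m (s n) t - z t)) \<longlonglongrightarrow> 0"
proof -
  have "\<forall>n. \<exists>u. u \<in> FT \<and> l1norm (\<lambda>t. tmap m u t - z t) < inverse (real (Suc n))"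
    using dense by (meson inverse_positive_iff_positive of_nat_0_less_iff zero_less_Suc)
  then obtain s where s: "\<And>n. s n \<in> FT" "\<And>n. l1norm (\<lambda>t. tmap m (s n) t - z t) < inverse (real (Suc n))"
    by metis
  have "(\<lambda>n. l1norm (\<lambda>t. tmap m (s n) t - z t)) \<longlonglongrightarrow> 0"
    by (rule real_tendsto_sandwich[OF always_eventually always_eventually tendsto_const
          LIMSEQ_inverse_real_of_nat]) (use s(2) less_imp_le l1norm_nonneg in blast)+
  with s(1) show ?thesis by blast
qed

lemma induced_iso_if_isometric_dense:
  assumes isometric: "\<And>u. u \<in> FT \<Longrightarrow> qn u = l1norm (tmap m u)"
    and dense: "\<And>z e. z \<in> l1 \<Longrightarrow> e > 0 \<Longrightarrow> \<exists>u\<in>FT. l1norm (\<lambda>t. tmap m u t - z t) < e"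
  shows "induced_iso l1 l1norm l1 l1norm Alg rX lY m l1 l1norm"
proof -
  have qn_diff_le: "qn (\<lambda>p. s p - s' p) \<le> l1norm (\<lambda>t. tmap m s t - z t) + l1norm (\<lambda>t. tmap m s' t - z t)"
    if "s \<in> FT" "s' \<in> FT" "z \<in> l1" for s s' z
  proof -
    have "qn (\<lambda>p. s p - s' p) = l1norm (\<lambda>t. tmap m s t - tmap m s' t)"
      using isometric[OF free_tensor_diff[OF that(1,2)]]
      by (simp only: tmap_diff[OF FT_finite[OF that(1)] FT_finite[OF that(2)]])
    also have "\<dots> \<le> l1norm (\<lambda>t. tmap m s t - z t) + l1norm (\<lambda>t. z t - tmap m s' t)"
      by (rule l1norm_diff_triangle[OF tmap_l1[OF that(1)] that(3) tmap_l1[OF that(2)]])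
    finally show ?thesis using l1norm_diff_commute[of z "tmap m s'"] by linarith
  qed
  let ?cauchy = "\<lambda>s. (\<forall>n. s n \<in> FT) \<and> (\<forall>e>0. \<exists>N. \<forall>k\<ge>N. \<forall>n\<ge>N. qn (\<lambda>p. s k p - s n p) < e)"
  let ?conv = "\<lambda>s z. (\<lambda>n. l1norm (\<lambda>t. tmap m (s n) t - z t)) \<longlonglongrightarrow> 0"
  have approximated: "\<exists>s. ?cauchy s \<and> ?conv s z" if z: "z \<in> l1" for z
  proof -
    obtain s where s: "\<And>n. s n \<in> FT" "?conv s z"
      using exists_FT_seq_tendsto[OF dense[OF z]] by blast
    define d where "d = (\<lambda>n. l1norm (\<lambda>t. tmap m (s n) t - z t))"
    have "\<exists>N. \<forall>k\<ge>N. \<forall>n\<ge>N. qn (\<lambda>p. s k p - s n p) < e" if e_pos: "e > 0" for e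
    proof -
      have "d \<longlonglongrightarrow> 0" unfolding d_def by (rule s(2))
      then obtain N where N: "\<forall>k\<ge>N. \<forall>n\<ge>N. d k + d n < e"
        using LIMSEQ_zero_pairwise_sum_less[OF _ e_pos] by blast
      have "qn (\<lambda>p. s k p - s n p) < e" if "k \<ge> N" "n \<ge> N" for k n
        using qn_diff_le[OF s(1) s(1) z, of k n] N[rule_format, OF that] unfolding d_def by linarith
      then show ?thesis by blast
    qed
    then show ?thesis using s by (intro exI[of _ s] conjI allI impI) auto
  qed
  have unique: "(\<lambda>n. qn (\<lambda>p. s n p - s' n p)) \<longlonglongrightarrow> 0"
    if "?cauchy s \<and> ?cauchy s' \<and> z \<in> l1 \<and> ?conv s z \<and> ?conv s' z" for s s' z
  proof (rule real_tendsto_sandwich[OF always_eventually always_eventually tendsto_const])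
    have FT: "s n \<in> FT" "s' n \<in> FT" for n using that by auto
    have conv: "?conv s z" "?conv s' z" using that by blast+
    show "(\<lambda>n. l1norm (\<lambda>t. tmap m (s n) t - z t) + l1norm (\<lambda>t. tmap m (s' n) t - z t)) \<longlonglongrightarrow> 0"
      using tendsto_add[OF conv] by simp
    show "\<forall>n. qn (\<lambda>p. s n p - s' n p) \<le> l1norm (\<lambda>t. tmap m (s n) t - z t) + l1norm (\<lambda>t. tmap m (s' n) t - z t)"
      using qn_diff_le[OF FT] that by blast
    show "\<forall>n. 0 \<le> qn (\<lambda>p. s n p - s' n p)"
      using isometric[OF free_tensor_diff[OF FT]] by (simp add: l1norm_nonneg)
  qed
  have bounded: "lim (\<lambda>n. qn (s n)) \<le> 1 * l1norm z" if "?cauchy s \<and> z \<in> l1 \<and> ?conv s z" for s z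
  proof -
    have le: "norm (qn (s n) - l1norm z) \<le> l1norm (\<lambda>t. tmap m (s n) t - z t)" for n
      using isometric l1norm_diff_reverse_triangle[OF tmap_l1] that by simp
    have "?conv s z" using that by blast
    then have "(\<lambda>n. qn (s n) - l1norm z) \<longlonglongrightarrow> 0"
      by (rule Lim_null_comparison[OF always_eventually[OF allI[OF le]]])
    then show ?thesis by (simp add: LIM_zero_iff limI)
  qed
  show ?thesis
    unfolding induced_iso_def Let_def
  proof (intro conjI allI ballI impI exI[of _ 1])
    show "tmap m u \<in> l1" if "u \<in> FT" for u using tmap_l1[OF that] .
    show "l1norm (tmap m u) \<le> 1 * qn u" if "u \<in> FT" for u using tmap_norm_le_qn[OF that] by simp
  qed (fact approximated unique bounded)+
qed

end

interpretation lact: balanced_contraction "l1::('i \<times> 'i \<Rightarrow> complex) set" M_mult M_lact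
  "M_lact :: ('i \<times> 'i \<Rightarrow> complex) \<Rightarrow> ('i \<Rightarrow> complex) \<Rightarrow> ('i \<Rightarrow> complex)"
  by unfold_locales
    (auto simp: M_lact_l1 M_lact_add_left M_lact_add_right M_lact_scale_left M_lact_scale_right M_lact_assoc)

interpretation ract: balanced_contraction "l1::('i \<times> 'i \<Rightarrow> complex) set" M_ract M_mult
  "M_ract :: ('i \<Rightarrow> complex) \<Rightarrow> ('i \<times> 'i \<Rightarrow> complex) \<Rightarrow> ('i \<Rightarrow> complex)"
  by unfold_locales
    (auto simp: M_ract_l1 M_ract_add_left M_ract_add_right M_ract_scale_left M_ract_scale_right M_ract_assoc)

interpretation mult: balanced_contraction "l1::('i \<times> 'i \<Rightarrow> complex) set" M_mult M_mult
  "M_mult :: ('i \<times> 'i \<Rightarrow> complex) \<Rightarrow> ('i \<times> 'i \<Rightarrow> complex) \<Rightarrow> ('i \<times> 'i \<Rightarrow> complex)"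
  by unfold_locales
    (auto simp: M_mult_l1 M_mult_add_left M_mult_add_right M_mult_scale_left M_mult_scale_right M_mult_assoc)

subsection \<open>\<open>\<ell>\<^sup>1(I)\<close> is two-sided induced\<close>

definition col_matrix :: "'i \<Rightarrow> ('i \<Rightarrow> complex) \<Rightarrow> ('i \<times> 'i \<Rightarrow> complex)" where
  "col_matrix i0 x = (\<lambda>(i, j). if j = i0 then x i else 0)"

definition row_matrix :: "'i \<Rightarrow> ('i \<Rightarrow> complex) \<Rightarrow> ('i \<times> 'i \<Rightarrow> complex)" where
  "row_matrix i0 x = (\<lambda>(i, j). if i = i0 then x j else 0)"

lemma col_matrix_l1: "x \<in> l1 \<Longrightarrow> col_matrix i0 x \<in> l1" "l1norm (col_matrix i0 x) = l1norm x"
proof -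
  have "col_matrix i0 x \<circ> (\<lambda>i. (i, i0)) = x" by (auto simp: col_matrix_def)
  moreover have "col_matrix i0 x \<in> l1 \<longleftrightarrow> (col_matrix i0 x \<circ> (\<lambda>i. (i, i0))) \<in> l1"
      "l1norm (col_matrix i0 x) = l1norm (col_matrix i0 x \<circ> (\<lambda>i. (i, i0)))"
    by (rule l1_reindex; auto simp: inj_on_def col_matrix_def)+
  ultimately show "x \<in> l1 \<Longrightarrow> col_matrix i0 x \<in> l1" "l1norm (col_matrix i0 x) = l1norm x" by auto
qed

lemma row_matrix_l1: "x \<in> l1 \<Longrightarrow> row_matrix i0 x \<in> l1" "l1norm (row_matrix i0 x) = l1norm x"
proof -
  have "row_matrix i0 x \<circ> Pair i0 = x" by (auto simp: row_matrix_def)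
  moreover have "row_matrix i0 x \<in> l1 \<longleftrightarrow> (row_matrix i0 x \<circ> Pair i0) \<in> l1"
      "l1norm (row_matrix i0 x) = l1norm (row_matrix i0 x \<circ> Pair i0)"
    by (rule l1_reindex; auto simp: inj_on_def row_matrix_def)+
  ultimately show "x \<in> l1 \<Longrightarrow> row_matrix i0 x \<in> l1" "l1norm (row_matrix i0 x) = l1norm x" by auto
qed

lemma M_lact_col_matrix_delta: "M_lact (col_matrix i0 x) (delta i0) = x"
  by (rule ext) (simp add: M_lact_def infsum_single_point[where a=i0] col_matrix_def delta_def)

lemma M_ract_delta_row_matrix: "M_ract (delta i0) (row_matrix i0 x) = x"
  by (rule ext) (simp add: M_ract_def infsum_single_point[where a=i0] row_matrix_def delta_def)

lemma M_mult_col_matrix: "M_mult a (col_matrix i0 x) = col_matrix i0 (M_lact a x)"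
  by (rule ext) (auto simp: M_mult_def col_matrix_def M_lact_def)

lemma M_mult_row_matrix: "M_mult (row_matrix i0 x) a = row_matrix i0 (M_ract x a)"
  by (rule ext) (auto simp: M_mult_def row_matrix_def M_ract_def)

lemma sum_col_matrix: "(\<lambda>t. \<Sum>p\<in>F. c p * col_matrix i0 (f p) t) = col_matrix i0 (\<lambda>t. \<Sum>p\<in>F. c p * f p t)"
  by (auto simp: col_matrix_def)

lemma sum_row_matrix: "(\<lambda>t. \<Sum>p\<in>F. c p * row_matrix i0 (f p) t) = row_matrix i0 (\<lambda>t. \<Sum>p\<in>F. c p * f p t)"
  by (auto simp: row_matrix_def)

lemma lact_tcong_elementary:
  assumes u: "u \<in> lact.FT"
  shows "lact.tcong u (delta (col_matrix i0 (tmap M_lact u), delta i0))"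
proof -
  have rep: "lact.tcong (delta p) (delta (col_matrix i0 (M_lact (fst p) (snd p)), delta i0))"
    if hp: "p \<in> fsupp u" for p
  proof -
    obtain a x where p: "p = (a, x)" and a: "a \<in> l1" and x: "x \<in> l1"
      using lact.FT_fsupp_l1[OF u] hp by (cases p) auto
    show ?thesis
      using span_cong_sym[OF lact.tcong_balanced[OF a col_matrix_l1(1)[OF x, of i0] l1_delta(1)[of i0]]]
      unfolding p M_mult_col_matrix M_lact_col_matrix_delta by simp
  qed
  have mem: "col_matrix i0 (M_lact (fst p) (snd p)) \<in> l1" if "p \<in> fsupp u" for p
    using lact.FT_fsupp_l1[OF u, of "fst p" "snd p"] that by (simp add: col_matrix_l1 M_lact_l1)
  have "lact.tcong u (delta (\<lambda>t. \<Sum>p\<in>fsupp u. u p * col_matrix i0 (M_lact (fst p) (snd p)) t, delta i0))"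
    using mem rep by (intro lact.tcong_elementary_left[OF u l1_delta(1)]) blast
  then show ?thesis by (simp add: sum_col_matrix tmap_def)
qed

lemma ract_tcong_elementary:
  assumes u: "u \<in> ract.FT"
  shows "ract.tcong u (delta (delta i0, row_matrix i0 (tmap M_ract u)))"
proof -
  have rep: "ract.tcong (delta p) (delta (delta i0, row_matrix i0 (M_ract (fst p) (snd p))))"
    if hp: "p \<in> fsupp u" for p
  proof -
    obtain x a where p: "p = (x, a)" and x: "x \<in> l1" and a: "a \<in> l1"
      using ract.FT_fsupp_l1[OF u] hp by (cases p) auto
    show ?thesis
      using ract.tcong_balanced[OF l1_delta(1)[of i0] row_matrix_l1(1)[OF x, of i0] a]
      unfolding p M_mult_row_matrix M_ract_delta_row_matrix by simp
  qed
  have mem: "row_matrix i0 (M_ract (fst p) (snd p)) \<in> l1" if "p \<in> fsupp u" for p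
    using ract.FT_fsupp_l1[OF u, of "fst p" "snd p"] that by (simp add: row_matrix_l1 M_ract_l1)
  have "ract.tcong u (delta (delta i0, \<lambda>t. \<Sum>p\<in>fsupp u. u p * row_matrix i0 (M_ract (fst p) (snd p)) t))"
    using mem rep by (intro ract.tcong_elementary_right[OF u l1_delta(1)]) blast
  then show ?thesis by (simp add: sum_row_matrix tmap_def)
qed

text \<open>Any index serves as the pivot \<open>i\<^sub>0\<close>; this is where \<open>I \<noteq> {}\<close> is used, HOL types being
  nonempty.\<close>

lemma l1_left_induced_holds: "l1_left_induced TYPE('i)"
  unfolding l1_left_induced_def
proof (rule lact.induced_iso_if_isometric_dense)
  fix u :: "('i \<times> 'i \<Rightarrow> complex) \<times> ('i \<Rightarrow> complex) \<Rightarrow> complex"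
  assume u: "u \<in> lact.FT"
  let ?v = "delta (col_matrix undefined (tmap M_lact u), delta undefined)"
  show "lact.qn u = l1norm (tmap M_lact u)"
  proof (rule lact.qn_eq_tmap_norm_if_rep[OF u _ lact_tcong_elementary[OF u]])
    show "?v \<in> lact.FT" by (rule free_tensor_delta[OF col_matrix_l1(1)[OF lact.tmap_l1[OF u]] l1_delta(1)])
    show "proj_cost ?v \<le> l1norm (tmap M_lact u)" by (simp add: proj_cost_delta col_matrix_l1(2) l1_delta(2))
  qed
next
  fix z :: "'i \<Rightarrow> complex" and e :: real
  assume "z \<in> l1" "e > 0"
  then show "\<exists>u\<in>lact.FT. l1norm (\<lambda>t. tmap M_lact u t - z t) < e"
    by (intro bexI[of _ "delta (col_matrix undefined z, delta undefined)"])
      (simp_all add: tmap_delta M_lact_col_matrix_delta free_tensor_delta col_matrix_l1 l1_delta)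
qed

lemma l1_right_induced_holds: "l1_right_induced TYPE('i)"
  unfolding l1_right_induced_def
proof (rule ract.induced_iso_if_isometric_dense)
  fix u :: "('i \<Rightarrow> complex) \<times> ('i \<times> 'i \<Rightarrow> complex) \<Rightarrow> complex"
  assume u: "u \<in> ract.FT"
  let ?v = "delta (delta undefined, row_matrix undefined (tmap M_ract u))"
  show "ract.qn u = l1norm (tmap M_ract u)"
  proof (rule ract.qn_eq_tmap_norm_if_rep[OF u _ ract_tcong_elementary[OF u]])
    show "?v \<in> ract.FT" by (rule free_tensor_delta[OF l1_delta(1) row_matrix_l1(1)[OF ract.tmap_l1[OF u]]])
    show "proj_cost ?v \<le> l1norm (tmap M_ract u)" by (simp add: proj_cost_delta row_matrix_l1(2) l1_delta(2))
  qed
next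
  fix z :: "'i \<Rightarrow> complex" and e :: real
  assume "z \<in> l1" "e > 0"
  then show "\<exists>u\<in>ract.FT. l1norm (\<lambda>t. tmap M_ract u t - z t) < e"
    by (intro bexI[of _ "delta (delta undefined, row_matrix undefined z)"])
      (simp_all add: tmap_delta M_ract_delta_row_matrix free_tensor_delta row_matrix_l1 l1_delta)
qed

subsection \<open>\<open>\<M>\<^sub>I\<close> is self-induced\<close>

definition move_row :: "'i \<Rightarrow> 'i \<Rightarrow> ('i \<times> 'i \<Rightarrow> complex) \<Rightarrow> ('i \<times> 'i \<Rightarrow> complex)" where
  "move_row i0 i a = (\<lambda>(i', j). if i' = i0 then a (i, j) else 0)"

definition rows_on :: "'i set \<Rightarrow> ('i \<times> 'i \<Rightarrow> complex) \<Rightarrow> ('i \<times> 'i \<Rightarrow> complex)" where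
  "rows_on K a = (\<lambda>(i, j). if i \<in> K then a (i, j) else 0)"

definition rows_off :: "'i set \<Rightarrow> ('i \<times> 'i \<Rightarrow> complex) \<Rightarrow> ('i \<times> 'i \<Rightarrow> complex)" where
  "rows_off K a = (\<lambda>(i, j). if i \<in> K then 0 else a (i, j))"

lemma move_row_l1: "a \<in> l1 \<Longrightarrow> move_row i0 i a \<in> l1" "l1norm (move_row i0 i a) = l1norm (\<lambda>j. a (i, j))"
proof -
  have "move_row i0 i a \<circ> Pair i0 = (\<lambda>j. a (i, j))" by (auto simp: move_row_def)
  moreover have "move_row i0 i a \<in> l1 \<longleftrightarrow> (move_row i0 i a \<circ> Pair i0) \<in> l1"
      "l1norm (move_row i0 i a) = l1norm (move_row i0 i a \<circ> Pair i0)"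
    by (rule l1_reindex; auto simp: inj_on_def move_row_def)+
  ultimately show "a \<in> l1 \<Longrightarrow> move_row i0 i a \<in> l1" "l1norm (move_row i0 i a) = l1norm (\<lambda>j. a (i, j))"
    using l1_rows[of a i] by auto
qed

lemma M_mult_move_row: "M_mult (move_row i0 i a) b = move_row i0 i (M_mult a b)"
  by (rule ext) (auto simp: M_mult_def move_row_def)

lemma sum_move_row: "(\<lambda>t. \<Sum>p\<in>F. c p * move_row i0 i (f p) t) = move_row i0 i (\<lambda>t. \<Sum>p\<in>F. c p * f p t)"
  by (auto simp: move_row_def)

lemma sum_M_mult_delta_move_row:
  assumes "finite K"
  shows "(\<lambda>t. \<Sum>i\<in>K. M_mult (delta (i, i0)) (move_row i0 i a) t) = rows_on K a"
proof
  fix t :: "'a \<times> 'a"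
  obtain i' j where t: "t = (i', j)" by fastforce
  have "M_mult (delta (i, i0)) (move_row i0 i a) (i', j) = (if i' = i then a (i, j) else 0)" for i
    unfolding M_mult_apply by (subst infsum_single_point[where a=i0]) (auto simp: delta_def move_row_def)
  then show "(\<Sum>i\<in>K. M_mult (delta (i, i0)) (move_row i0 i a) t) = rows_on K a t"
    using assms by (simp add: t rows_on_def)
qed

lemma rows_on_add_rows_off: "(\<lambda>t. rows_on K a t + rows_off K a t) = a"
  by (auto simp: rows_on_def rows_off_def)

lemma rows_on_l1: "a \<in> l1 \<Longrightarrow> rows_on K a \<in> l1"
  by (rule l1_comparison(1)[of a _ 1]) (auto simp: rows_on_def)

lemma rows_off_l1: "a \<in> l1 \<Longrightarrow> rows_off K a \<in> l1"
  by (rule l1_comparison(1)[of a _ 1]) (auto simp: rows_off_def)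

lemma l1norm_rows_off_le:
  assumes a: "a \<in> l1" and S: "fst ` S \<subseteq> K"
  shows "l1norm (rows_off K a) \<le> infsum (\<lambda>q. norm (a q)) (UNIV - S)"
proof -
  have "l1norm (rows_off K a) = infsum (\<lambda>q. norm (rows_off K a q)) (UNIV - S)"
    unfolding l1norm_def using S by (intro infsum_cong_neutral) (auto simp: rows_off_def split: prod.splits)
  also have "\<dots> \<le> infsum (\<lambda>q. norm (a q)) (UNIV - S)"
  proof (rule infsum_mono)
    show "(\<lambda>q. norm (rows_off K a q)) summable_on UNIV - S" "(\<lambda>q. norm (a q)) summable_on UNIV - S"
      using a rows_off_l1[OF a, of K] unfolding l1_def by (auto intro: summable_on_subset_banach)
    show "norm (rows_off K a q) \<le> norm (a q)" for q by (auto simp: rows_off_def split: prod.splits)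
  qed
  finally show ?thesis .
qed

lemma mult_tcong_row_split:
  assumes a: "a \<in> l1" and b: "b \<in> l1" and K: "finite K"
  shows "mult.tcong (delta (a, b))
    (\<lambda>q. (\<Sum>i\<in>K. delta (delta (i, i0), move_row i0 i (M_mult a b)) q) + delta (rows_off K a, b) q)"
proof -
  have "mult.tcong (delta (a, b)) (\<lambda>q. delta (rows_on K a, b) q + delta (rows_off K a, b) q)"
    using mult.tcong_add_left[OF rows_on_l1[OF a, of K] rows_off_l1[OF a, of K] b] by (simp only: rows_on_add_rows_off)
  also have "mult.tcong \<dots> (\<lambda>q. (\<Sum>i\<in>K. delta (M_mult (delta (i, i0)) (move_row i0 i a), b) q) + delta (rows_off K a, b) q)"
  proof (intro span_cong_add[OF _ span_cong_refl])
    have "mult.tcong (delta (\<lambda>t. \<Sum>i\<in>K. M_mult (delta (i, i0)) (move_row i0 i a) t, b))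
        (\<lambda>q. \<Sum>i\<in>K. delta (M_mult (delta (i, i0)) (move_row i0 i a), b) q)"
      by (rule mult.tcong_sum_left[OF K _ b]) (simp add: M_mult_l1 l1_delta move_row_l1 a)
    then show "mult.tcong (delta (rows_on K a, b))
        (\<lambda>q. \<Sum>i\<in>K. delta (M_mult (delta (i, i0)) (move_row i0 i a), b) q)"
      by (simp only: sum_M_mult_delta_move_row[OF K])
  qed
  also have "mult.tcong \<dots> (\<lambda>q. (\<Sum>i\<in>K. delta (delta (i, i0), move_row i0 i (M_mult a b)) q) + delta (rows_off K a, b) q)"
    using mult.tcong_balanced[OF l1_delta(1) move_row_l1(1)[OF a] b]
    by (intro span_cong_add[OF span_cong_sum[OF K] span_cong_refl]) (simp add: M_mult_move_row)
  finally show ?thesis .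
qed

lemma mult_tcong_row_split_FT:
  fixes i0 :: 'i
  assumes u: "u \<in> mult.FT" and K: "finite K"
  shows "mult.tcong u (\<lambda>q. (\<Sum>i\<in>K. delta (delta (i, i0), move_row i0 i (tmap M_mult u)) q)
      + (\<Sum>p\<in>fsupp u. u p * delta (rows_off K (fst p), snd p) q))"
proof -
  let ?F = "fsupp u"
  let ?D = "\<lambda>i p. delta (delta (i, i0), move_row i0 i (M_mult (fst p) (snd p)))"
  let ?R = "\<lambda>p. delta (rows_off K (fst p), snd p)"
  have fin: "finite ?F" and mem: "\<And>p. p \<in> ?F \<Longrightarrow> fst p \<in> l1 \<and> snd p \<in> l1"
    using mult.FT_finite[OF u] mult.FT_fsupp_l1[OF u] by auto
  have "mult.tcong u (\<lambda>q. \<Sum>p\<in>?F. u p * ((\<Sum>i\<in>K. ?D i p q) + ?R p q))"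
    by (rule span_cong_expansion[OF fin]) (use mem mult_tcong_row_split[OF _ _ K] in auto)
  also have "(\<lambda>q. \<Sum>p\<in>?F. u p * ((\<Sum>i\<in>K. ?D i p q) + ?R p q))
      = (\<lambda>q. (\<Sum>i\<in>K. \<Sum>p\<in>?F. u p * ?D i p q) + (\<Sum>p\<in>?F. u p * ?R p q))"
    by (simp add: distrib_left sum.distrib sum_distrib_left sum.swap[of _ ?F K])
  also have "mult.tcong \<dots> (\<lambda>q. (\<Sum>i\<in>K. delta (delta (i, i0), move_row i0 i (tmap M_mult u)) q)
      + (\<Sum>p\<in>?F. u p * ?R p q))"
  proof (intro span_cong_add[OF span_cong_sum[OF K] span_cong_refl])
    fix i
    have "mult.tcong (\<lambda>q. \<Sum>p\<in>?F. u p * ?D i p q)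
        (delta (delta (i, i0), \<lambda>t. \<Sum>p\<in>?F. u p * move_row i0 i (M_mult (fst p) (snd p)) t))"
      by (rule mult.tcong_lincomb_right[OF fin _ l1_delta(1)]) (use mem in \<open>simp add: move_row_l1 M_mult_l1\<close>)
    then show "mult.tcong (\<lambda>q. \<Sum>p\<in>?F. u p * ?D i p q) (delta (delta (i, i0), move_row i0 i (tmap M_mult u)))"
      by (simp only: sum_move_row) (simp add: tmap_def)
  qed
  finally show ?thesis .
qed

lemma proj_cost_row_split_le:
  fixes i0 :: 'i
  assumes u: "u \<in> mult.FT" and K: "finite K"
  shows "proj_cost (\<lambda>q. (\<Sum>i\<in>K. delta (delta (i, i0), move_row i0 i (tmap M_mult u)) q)
      + (\<Sum>p\<in>fsupp u. u p * delta (rows_off K (fst p), snd p) q))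
    \<le> l1norm (tmap M_mult u) + (\<Sum>p\<in>fsupp u. norm (u p) * (l1norm (rows_off K (fst p)) * l1norm (snd p)))"
proof -
  let ?W = "tmap M_mult u"
  have fin: "finite (fsupp u)" using mult.FT_finite[OF u] .
  have "proj_cost (\<lambda>q. \<Sum>i\<in>K. delta (delta (i, i0), move_row i0 i ?W) q)
      \<le> (\<Sum>i\<in>K. proj_cost (delta (delta (i, i0), move_row i0 i ?W)))"
    by (rule proj_cost_sum[OF K finite_fsupp_delta])
  also have "\<dots> = (\<Sum>i\<in>K. l1norm (\<lambda>j. ?W (i, j)))"
    by (simp add: proj_cost_delta l1_delta(2) move_row_l1(2))
  also have "\<dots> \<le> l1norm ?W" by (rule sum_l1norm_rows_le[OF mult.tmap_l1[OF u] K])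
  finally have rows: "proj_cost (\<lambda>q. \<Sum>i\<in>K. delta (delta (i, i0), move_row i0 i ?W) q) \<le> l1norm ?W" .
  have "proj_cost (\<lambda>q. \<Sum>p\<in>fsupp u. u p * delta (rows_off K (fst p), snd p) q)
      \<le> (\<Sum>p\<in>fsupp u. proj_cost (\<lambda>q. u p * delta (rows_off K (fst p), snd p) q))"
    by (rule proj_cost_sum[OF fin finite_fsupp_scale[OF finite_fsupp_delta]])
  also have "\<dots> = (\<Sum>p\<in>fsupp u. norm (u p) * (l1norm (rows_off K (fst p)) * l1norm (snd p)))"
    by (simp add: proj_cost_scale[OF finite_fsupp_delta] proj_cost_delta)
  finally have rest: "proj_cost (\<lambda>q. \<Sum>p\<in>fsupp u. u p * delta (rows_off K (fst p), snd p) q)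
      \<le> (\<Sum>p\<in>fsupp u. norm (u p) * (l1norm (rows_off K (fst p)) * l1norm (snd p)))" .
  have "finite (fsupp (\<lambda>q. \<Sum>i\<in>K. delta (delta (i, i0), move_row i0 i ?W) q))"
      "finite (fsupp (\<lambda>q. \<Sum>p\<in>fsupp u. u p * delta (rows_off K (fst p), snd p) q))"
    using K fin by (auto intro!: finite_fsupp_sum finite_fsupp_scale finite_fsupp_delta)
  from proj_cost_add[OF this] rows rest show ?thesis by linarith
qed

text \<open>Truncating every left factor to finitely many rows costs at most \<open>\<epsilon>\<close>: the set \<open>K\<close> of
  retained rows is chosen from a common finite set carrying all but \<open>\<epsilon> / (C + 1)\<close> of the mass.\<close>

lemma mult_tcong_approx:
  fixes u :: "('i \<times> 'i \<Rightarrow> complex) \<times> ('i \<times> 'i \<Rightarrow> complex) \<Rightarrow> complex"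
  assumes u: "u \<in> mult.FT" and e: "e > 0"
  shows "\<exists>v\<in>mult.FT. mult.tcong u v \<and> proj_cost v \<le> l1norm (tmap M_mult u) + e"
proof -
  define i0 :: 'i where "i0 = undefined"
  have fin: "finite (fsupp u)" and mem: "\<And>p. p \<in> fsupp u \<Longrightarrow> fst p \<in> l1 \<and> snd p \<in> l1"
    using mult.FT_finite[OF u] mult.FT_fsupp_l1[OF u] by auto
  define C where "C = (\<Sum>p\<in>fsupp u. norm (u p) * l1norm (snd p))"
  have C: "C \<ge> 0" unfolding C_def by (intro sum_nonneg mult_nonneg_nonneg norm_ge_zero l1norm_nonneg)
  define d where "d = e / (C + 1)"
  have d: "d > 0" "d * C \<le> e"
    using e C by (auto simp: d_def field_simps)
  obtain S where S: "finite S" "\<And>p. p \<in> fsupp u \<Longrightarrow> infsum (\<lambda>q. norm (fst p q)) (UNIV - S) < d"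
    using l1_uniform_tail[OF fin _ d(1), of fst] mem by blast
  define K where "K = fst ` S"
  have K: "finite K" unfolding K_def using S(1) by simp
  define v where "v = (\<lambda>q. (\<Sum>i\<in>K. delta (delta (i, i0), move_row i0 i (tmap M_mult u)) q)
      + (\<Sum>p\<in>fsupp u. u p * delta (rows_off K (fst p), snd p) q))"
  have "v \<in> mult.FT"
    unfolding v_def using K fin mem mult.tmap_l1[OF u]
    by (intro free_tensor_add free_tensor_sum free_tensor_scale free_tensor_delta)
      (auto simp: l1_delta move_row_l1 rows_off_l1)
  moreover have "mult.tcong u v" unfolding v_def by (rule mult_tcong_row_split_FT[OF u K])
  moreover have "(\<Sum>p\<in>fsupp u. norm (u p) * (l1norm (rows_off K (fst p)) * l1norm (snd p))) \<le> d * C"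
  proof -
    have "l1norm (rows_off K (fst p)) \<le> d" if "p \<in> fsupp u" for p
      using l1norm_rows_off_le[OF conjunct1[OF mem[OF that]], of S K] S(2)[OF that] by (simp add: K_def)
    then have "(\<Sum>p\<in>fsupp u. norm (u p) * (l1norm (rows_off K (fst p)) * l1norm (snd p)))
        \<le> (\<Sum>p\<in>fsupp u. norm (u p) * (d * l1norm (snd p)))"
      by (intro sum_mono mult_left_mono mult_right_mono) (auto simp: l1norm_nonneg)
    also have "\<dots> = d * C" unfolding C_def by (simp add: sum_distrib_left mult_ac)
    finally show ?thesis .
  qed
  then have "proj_cost v \<le> l1norm (tmap M_mult u) + e"
    using proj_cost_row_split_le[OF u K, of i0] d(2) unfolding v_def by linarith
  ultimately show ?thesis by blast
qed

lemma mult_dense: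
  fixes z :: "'i \<times> 'i \<Rightarrow> complex"
  assumes z: "z \<in> l1" and e: "e > 0"
  shows "\<exists>u\<in>mult.FT. l1norm (\<lambda>t. tmap M_mult u t - z t) < e"
proof -
  define i0 :: 'i where "i0 = undefined"
  obtain S where S: "finite S" "infsum (\<lambda>q. norm (z q)) (UNIV - S) < e"
    using l1_uniform_tail[of "{z}" "\<lambda>p. p" e] z e by auto
  define K where "K = fst ` S"
  have K: "finite K" unfolding K_def using S(1) by simp
  define u where "u = (\<lambda>q. \<Sum>i\<in>K. delta (delta (i, i0), move_row i0 i z) q)"
  have "u \<in> mult.FT"
    unfolding u_def by (rule free_tensor_sum[OF K free_tensor_delta[OF l1_delta(1) move_row_l1(1)[OF z]]])
  moreover have "tmap M_mult u = rows_on K z"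
    unfolding u_def tmap_sum[OF K finite_fsupp_delta] tmap_delta fst_conv snd_conv
    by (rule sum_M_mult_delta_move_row[OF K])
  moreover have "(\<lambda>t. rows_on K z t - z t) = (\<lambda>t. (-1) * rows_off K z t)"
    by (auto simp: rows_on_def rows_off_def)
  moreover have "l1norm (rows_off K z) < e"
    using l1norm_rows_off_le[OF z, of S K] S(2) by (simp add: K_def)
  ultimately show ?thesis
    using l1norm_scale[of "-1" "rows_off K z"] by (intro bexI[of _ u]) simp_all
qed

lemma M_self_induced_holds: "M_self_induced TYPE('i)"
  unfolding M_self_induced_def
  by (rule mult.induced_iso_if_isometric_dense[OF mult.qn_eq_tmap_norm[OF mult_tcong_approx] mult_dense])

theorem proposition1:
  shows "(l1_left_induced TYPE('i) \<and> l1_right_induced TYPE('i)) \<and> M_self_induced TYPE('i)"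
  using l1_left_induced_holds l1_right_induced_holds M_self_induced_holds by blast

end
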